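(* Let $M$ be a closed oriented surface of genus $g\ge1$, $n\ge 2$, and use the notation of the context. Let $\iota:K_{n-1}(M)\to K_n(M)$ be any homomorphism with $\rho\circ\iota=\mathrm{id}$ (such a section exists). Let $j\in\{2,\dots,n\}$ and $u\in\mathcal{B}_{1\,j}$. Then for every $\beta\in K_{n-1}(M)$ there exists $\omega\in F_n(M)$ such that $\iota(\beta)\,u\,\iota(\beta)^{-1}=\omega u\omega^{-1}$; that is, the conjugacy class of $u$ in $F_n(M)$ is invariant under the action of $K_{n-1}(M)$ on $F_n(M)$ by conjugation through $\iota$.
   Context: Fix distinct points $P_1,\dots,P_n$ of $M$. $B_n(M)$ is the braid group of $M$ on $n$ strings based at $\{P_1,\dots,P_n\}$ (isotopy classes of $n$-tuples of disjoint paths $b_i$ in $M\times[0,1]$, monotone in the $[0,1]$-coordinate, from $(P_i,0)$ to $(P_{\zeta(i)},1)$ for a permutation $\zeta$; product by concatenation). Represent $M$ as a $4g$-gon with sides identified along the word $x_1\cdots x_{2g}x_1^{-1}\cdots x_{2g}^{-1}$, so $\pi_1(M)=\langle x_1,\dots,x_{2g}\mid x_1x_2\cdots x_{2g}=x_{2g}\cdots x_2x_1\rangle$. $B_n(M)$ is generated by $\sigma_1,\dots,\sigma_{n-1}$ (the standard half-twist exchanging strings $i,i+1$) and $a_1,\dots,a_{2g}$ (the braid whose first string travels once along the loop $x_k$, the other strings being constant), subject to the relations: $\sigma_i\sigma_j=\sigma_j\sigma_i$ ($|i-j|\ge2$); $\sigma_i\sigma_{i+1}\sigma_i=\sigma_{i+1}\sigma_i\sigma_{i+1}$;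 $a_1\cdots a_{2g}a_1^{-1}\cdots a_{2g}^{-1}=\sigma_1\cdots\sigma_{n-2}\sigma_{n-1}^2\sigma_{n-2}\cdots\sigma_1$; $a_rA_{2\,s}=A_{2\,s}a_r$ ($r\ne s$); $(a_1\cdots a_r)A_{2\,r}=\sigma_1^2A_{2\,r}(a_1\cdots a_r)$; $a_r\sigma_i=\sigma_ia_r$ ($i\ge2$), where $A_{2\,r}=\sigma_1^{-1}(a_1\cdots a_{r-1}a_{r+1}^{-1}\cdots a_{2g}^{-1})\sigma_1^{-1}$. $PB_n(M)$ is the kernel of the homomorphism $B_n(M)\to\mathrm{Sym}_n$, $\sigma_i\mapsto(i,i+1)$, $a_k\mapsto1$. Put $T_{i\,j}=\sigma_i\cdots\sigma_{j-2}\sigma_{j-1}^2\sigma_{j-2}^{-1}\cdots\sigma_i^{-1}$ for $i<j$, and $a_{i\,k}=\sigma_{i-1}^{-1}\cdots\sigma_1^{-1}a_k\sigma_1^{-1}\cdots\sigma_{i-1}^{-1}$ if $k$ is odd, $a_{i\,k}=\sigma_{i-1}\cdots\sigma_1a_k\sigma_1\cdots\sigma_{i-1}$ if $k$ is even (so $a_{1\,k}=a_k$). Let $\phi:PB_n(M)\to\pi_1(M)^n$ send a pure braid to the tuple of classes of the projections to $M$ of its strings, and $K_n(M)=\ker\phi$. Let $\rho:PB_n(M)\to PB_{n-1}(M)$ forget the first string; it maps $K_n(M)$ onto $K_{n-1}(M)$. Let $F_n(M)=K_n(M)\cap\ker\rho$. For each $\gamma\in\pi_1(M)$ choose a word $\tilde\gamma$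 in $x_1^{\pm1},\dots,x_{2g}^{\pm1}$ representing $\gamma$, such that the set of chosen words is prefix-closed; $\tilde\gamma_{(1)}$ denotes the element of $B_n(M)$ obtained by replacing each $x_k^{\pm1}$ by $a_{1\,k}^{\pm1}$. Set $\mathcal{B}_{1\,j}=\{\tilde\gamma_{(1)}T_{1\,j}\tilde\gamma_{(1)}^{-1}:\gamma\in\pi_1(M)\}$; $F_n(M)$ is free with free basis $\bigsqcup_{j=2}^n\mathcal{B}_{1\,j}$. *)

theory Defs
  imports "HOL-Algebra.Group" "HOL-Combinatorics.Transposition"
begin

text \<open>A word is a list of letters; (True, x) stands for x, (False, x) for x inverse.\<close>
type_synonym 'a word = "(bool \<times> 'a) list"

definition inv_word :: "'a word \<Rightarrow> 'a word" where
  "inv_word w = rev (map (\<lambda>(b, x). (\<not> b, x)) w)"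

inductive pres_eq :: "('a word \<times> 'a word) set \<Rightarrow> 'a word \<Rightarrow> 'a word \<Rightarrow> bool"
  for R :: "('a word \<times> 'a word) set" where
  refl: "pres_eq R w w"
| sym: "pres_eq R v w \<Longrightarrow> pres_eq R w v"
| trans: "pres_eq R u v \<Longrightarrow> pres_eq R v w \<Longrightarrow> pres_eq R u w"
| cancel: "pres_eq R (u @ [(b, x), (\<not> b, x)] @ v) (u @ v)"
| rel: "(l, r) \<in> R \<Longrightarrow> pres_eq R (u @ l @ v) (u @ r @ v)"

definition pclass :: "('a word \<times> 'a word) set \<Rightarrow> 'a word \<Rightarrow> 'a word set" where
  "pclass R w = {v. pres_eq R w v}"

definition pres_group :: "'a set \<Rightarrow> ('a word \<times> 'a word) set \<Rightarrow> 'a word set monoid" where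
  "pres_group S R =
     \<lparr>carrier = pclass R ` lists (UNIV \<times> S),
      mult = (\<lambda>A B. {w. \<exists>u\<in>A. \<exists>v\<in>B. pres_eq R (u @ v) w}),
      one = pclass R []\<rparr>"

definition prodw :: "('b \<Rightarrow> 'a word) \<Rightarrow> 'b list \<Rightarrow> 'a word" where
  "prodw f xs = concat (map f xs)"

definition pi_rels :: "nat \<Rightarrow> (nat word \<times> nat word) set" where
  "pi_rels g = {(prodw (\<lambda>k. [(True, k)]) [1..<2*g+1],
                 prodw (\<lambda>k. [(True, k)]) (rev [1..<2*g+1]))}"

definition pi1 :: "nat \<Rightarrow> nat word set monoid" where
  "pi1 g = pres_group {1..2*g} (pi_rels g)"

datatype bgen = Sg nat | Ag nat

definition sw :: "nat \<Rightarrow> bgen word" where "sw i = [(True, Sg i)]"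
definition swi :: "nat \<Rightarrow> bgen word" where "swi i = [(False, Sg i)]"
definition aw :: "nat \<Rightarrow> bgen word" where "aw k = [(True, Ag k)]"
definition awi :: "nat \<Rightarrow> bgen word" where "awi k = [(False, Ag k)]"

definition braid_gens :: "nat \<Rightarrow> nat \<Rightarrow> bgen set" where
  "braid_gens g n = {Sg i | i. 1 \<le> i \<and> i \<le> n - 1} \<union> {Ag k | k. 1 \<le> k \<and> k \<le> 2*g}"

definition surf_rhs :: "nat \<Rightarrow> bgen word" where
  "surf_rhs n = (if 2 \<le> n then prodw sw [1..<n-1] @ sw (n-1) @ sw (n-1) @ prodw sw (rev [1..<n-1])
                 else [])"

definition A2w :: "nat \<Rightarrow> nat \<Rightarrow> bgen word" where
  "A2w g r = swi 1 @ prodw aw [1..<r] @ prodw awi [r+1..<2*g+1] @ swi 1"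

definition braid_rels :: "nat \<Rightarrow> nat \<Rightarrow> (bgen word \<times> bgen word) set" where
  "braid_rels g n =
     {(sw i @ sw j, sw j @ sw i) | i j. 1 \<le> i \<and> i \<le> n - 1 \<and> 1 \<le> j \<and> j \<le> n - 1 \<and> (i + 2 \<le> j \<or> j + 2 \<le> i)}
   \<union> {(sw i @ sw (i+1) @ sw i, sw (i+1) @ sw i @ sw (i+1)) | i. 1 \<le> i \<and> i + 1 \<le> n - 1}
   \<union> {(prodw aw [1..<2*g+1] @ prodw awi [1..<2*g+1], surf_rhs n)}
   \<union> {(aw r @ A2w g s, A2w g s @ aw r) | r s. 2 \<le> n \<and> r \<in> {1..2*g} \<and> s \<in> {1..2*g} \<and> r \<noteq> s}
   \<union> {(prodw aw [1..<r+1] @ A2w g r, sw 1 @ sw 1 @ A2w g r @ prodw aw [1..<r+1]) | r. 2 \<le> n \<and> r \<in> {1..2*g}}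
   \<union> {(aw r @ sw i, sw i @ aw r) | r i. r \<in> {1..2*g} \<and> 2 \<le> i \<and> i \<le> n - 1}"

definition Bgrp :: "nat \<Rightarrow> nat \<Rightarrow> bgen word set monoid" where
  "Bgrp g n = pres_group (braid_gens g n) (braid_rels g n)"

definition bwords :: "nat \<Rightarrow> nat \<Rightarrow> bgen word set" where
  "bwords g n = lists (UNIV \<times> braid_gens g n)"

fun perm_word :: "bgen word \<Rightarrow> nat \<Rightarrow> nat" where
  "perm_word [] = id"
| "perm_word ((b, Sg i) # w) = Transposition.transpose i (i+1) \<circ> perm_word w"
| "perm_word ((b, Ag k) # w) = perm_word w"

definition PB :: "nat \<Rightarrow> nat \<Rightarrow> bgen word set set" where
  "PB g n = {pclass (braid_rels g n) w | w. w \<in> bwords g n \<and> perm_word w = id}"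

text \<open>Projection to M of the string starting at position p, as a word in x_k:
  crossings project to the fixed arcs between base points (trivial after identification),
  a_k contributes x_k exactly when the followed string is in position 1.\<close>
fun strand :: "nat \<Rightarrow> bgen word \<Rightarrow> nat word" where
  "strand p [] = []"
| "strand p ((b, Sg i) # w) = strand (if p = i then i + 1 else if p = i + 1 then i else p) w"
| "strand p ((b, Ag k) # w) = (if p = 1 then [(b, k)] else []) @ strand p w"

definition phi :: "nat \<Rightarrow> nat \<Rightarrow> bgen word set \<Rightarrow> nat \<Rightarrow> nat word set" where
  "phi g n c = (\<lambda>s\<in>{1..n}. pclass (pi_rels g) (strand s (SOME w. w \<in> c \<inter> bwords g n)))"

definition K :: "nat \<Rightarrow> nat \<Rightarrow> bgen word set set" where
  "K g n = {c \<in> PB g n. \<forall>s\<in>{1..n}. phi g n c s = \<one>\<^bsub>pi1 g\<^esub>}"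

fun forget :: "nat \<Rightarrow> bgen word \<Rightarrow> bgen word" where
  "forget p [] = []"
| "forget p ((b, Sg i) # w) =
     (if p = i then forget (i + 1) w
      else if p = i + 1 then forget i w
      else (b, Sg (if i < p then i else i - 1)) # forget p w)"
| "forget p ((b, Ag k) # w) = (if p = 1 then forget p w else (b, Ag k) # forget p w)"

definition rho :: "nat \<Rightarrow> nat \<Rightarrow> bgen word set \<Rightarrow> bgen word set" where
  "rho g n c = pclass (braid_rels g (n - 1)) (forget 1 (SOME w. w \<in> c \<inter> bwords g n))"

definition F :: "nat \<Rightarrow> nat \<Rightarrow> bgen word set set" where
  "F g n = {c \<in> K g n. rho g n c = \<one>\<^bsub>Bgrp g (n - 1)\<^esub>}"

definition Kgrp :: "nat \<Rightarrow> nat \<Rightarrow> bgen word set monoid" where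
  "Kgrp g n = (Bgrp g n)\<lparr>carrier := K g n\<rparr>"

definition Tw :: "nat \<Rightarrow> nat \<Rightarrow> bgen word" where
  "Tw i j = prodw sw [i..<j-1] @ sw (j-1) @ sw (j-1) @ prodw swi (rev [i..<j-1])"

text \<open>gamma tilde_(1): replace x_k^{+-1} by a_{1 k}^{+-1} = a_k^{+-1}.\<close>
definition lift1 :: "nat word \<Rightarrow> bgen word" where
  "lift1 v = map (\<lambda>(b, k). (b, Ag k)) v"

text \<open>A prefix-closed choice of representative words for the elements of pi_1(M).\<close>
definition transversal :: "nat \<Rightarrow> (nat word set \<Rightarrow> nat word) \<Rightarrow> bool" where
  "transversal g ch \<longleftrightarrow>
     (\<forall>\<gamma>\<in>carrier (pi1 g). ch \<gamma> \<in> lists (UNIV \<times> {1..2*g}) \<and> pclass (pi_rels g) (ch \<gamma>) = \<gamma>)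
   \<and> (\<forall>\<gamma>\<in>carrier (pi1 g). \<forall>m. \<exists>\<delta>\<in>carrier (pi1 g). ch \<delta> = take m (ch \<gamma>))"

definition Bset :: "nat \<Rightarrow> nat \<Rightarrow> (nat word set \<Rightarrow> nat word) \<Rightarrow> nat \<Rightarrow> bgen word set set" where
  "Bset g n ch j = {pclass (braid_rels g n) (lift1 (ch \<gamma>) @ Tw 1 j @ inv_word (lift1 (ch \<gamma>)))
                    | \<gamma>. \<gamma> \<in> carrier (pi1 g)}"

end

theory Submission
  imports Defs
begin

(* Write u = X T X^-1, where T = sigma_q^2 with q = j - 1 and X = gamma~_(1) sigma_1 ... sigma_(q-1)
   carries the first strand to position q.  Represent beta by a pure word w on n - 1 strands and
   double its q-th strand: the resulting pure braid D on n strands commutes with the full twist T of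
   the two parallel strands, and forgetting one of them gives back w.  Hence c = X D X^-1 lies in
   K_n(M), commutes with u and satisfies rho(c) = beta, so omega = iota(beta) c^-1 lies in F_n(M) and
   omega u omega^-1 = iota(beta) u iota(beta)^-1.  The surface relations enter only for q = 1, where
   the doubled a_k is a_(1 k) a_(2 k); it commutes with sigma_1 by a telescoping argument based on the
   relations a_r A_(2 s) = A_(2 s) a_r. *)

section \<open>Group presentations\<close>

lemma pres_eq_context: "pres_eq R a b \<Longrightarrow> pres_eq R (p @ a @ q) (p @ b @ q)"
proof (induction rule: pres_eq.induct)
  case (cancel u b x v)
  show ?case using pres_eq.cancel[of R "p @ u" b x "v @ q"] by simp
next
  case (rel l r u v)
  show ?case using pres_eq.rel[OF rel, of "p @ u" "v @ q"] by simp
qed (auto intro: pres_eq.intros)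

lemma pres_eq_append: "pres_eq R a b \<Longrightarrow> pres_eq R c d \<Longrightarrow> pres_eq R (a @ c) (b @ d)"
  using pres_eq_context[of R a b "[]" c] pres_eq_context[of R c d b "[]"] by (auto intro: pres_eq.trans)

lemma pres_eq_relI: "(l, r) \<in> R \<Longrightarrow> pres_eq R l r"
  using pres_eq.rel[of l r R "[]" "[]"] by simp

lemma pres_eq_cancel_pair: "pres_eq R [(b, x), (\<not> b, x)] []"
  using pres_eq.cancel[of R "[]" b x "[]"] by simp

lemma inv_word_Nil [simp]: "inv_word [] = []"
  by (simp add: inv_word_def)

lemma inv_word_Cons [simp]: "inv_word (x # w) = inv_word w @ [(\<not> fst x, snd x)]"
  by (cases x) (simp add: inv_word_def)

lemma inv_word_append [simp]: "inv_word (a @ b) = inv_word b @ inv_word a"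
  by (simp add: inv_word_def)

lemma inv_word_inv_word [simp]: "inv_word (inv_word a) = a"
  by (induction a) auto

lemma inv_word_lists_iff: "inv_word a \<in> lists (UNIV \<times> S) \<longleftrightarrow> a \<in> lists (UNIV \<times> S)"
  by (induction a) auto

lemma pres_eq_append_inv_word: "pres_eq R (a @ inv_word a) []"
proof (induction a)
  case (Cons x a)
  obtain b y where x: "x = (b, y)" by (cases x)
  have "pres_eq R ([x] @ (a @ inv_word a) @ [(\<not> b, y)]) ([x] @ [] @ [(\<not> b, y)])"
    using Cons by (rule pres_eq_context)
  then show ?case using x pres_eq_cancel_pair[of R b y] by (auto intro: pres_eq.trans)
qed (simp add: pres_eq.refl)

lemma pres_eq_inv_word_append: "pres_eq R (inv_word a @ a) []"
  using pres_eq_append_inv_word[of R "inv_word a"] by simp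

lemma pres_eq_Nil_append: "pres_eq R a [] \<Longrightarrow> pres_eq R b [] \<Longrightarrow> pres_eq R (a @ b) []"
  using pres_eq_append[of R a "[]" b "[]"] by simp

lemma pres_eq_Nil_inv_word: "pres_eq R a [] \<Longrightarrow> pres_eq R (inv_word a) []"
  using pres_eq_context[of R "[]" a "inv_word a" "[]"] pres_eq_inv_word_append[of R a]
  by (auto intro: pres_eq.trans pres_eq.sym)

lemma pres_eq_Nil_conj: "pres_eq R m [] \<Longrightarrow> pres_eq R (a @ m @ inv_word a) []"
  using pres_eq_context[of R m "[]" a "inv_word a"] pres_eq_append_inv_word[of R a]
  by (auto intro: pres_eq.trans)

lemma pclass_eq_iff: "pclass R a = pclass R b \<longleftrightarrow> pres_eq R a b"
  unfolding pclass_def by (auto intro: pres_eq.intros)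

lemma pres_group_mult [simp]: "pclass R a \<otimes>\<^bsub>pres_group S R\<^esub> pclass R b = pclass R (a @ b)"
  unfolding pres_group_def pclass_def by (auto intro: pres_eq.trans pres_eq.sym pres_eq_append pres_eq.refl)

lemma pres_group_one: "\<one>\<^bsub>pres_group S R\<^esub> = pclass R []"
  by (simp add: pres_group_def)

lemma pres_group_carrier: "carrier (pres_group S R) = pclass R ` lists (UNIV \<times> S)"
  by (simp add: pres_group_def)

lemma group_pres_group: "group (pres_group S R)"
proof (rule groupI)
  fix x assume "x \<in> carrier (pres_group S R)"
  then obtain a where a: "a \<in> lists (UNIV \<times> S)" "x = pclass R a" by (auto simp: pres_group_carrier)
  show "\<exists>y\<in>carrier (pres_group S R). y \<otimes>\<^bsub>pres_group S R\<^esub> x = \<one>\<^bsub>pres_group S R\<^esub>"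
  proof (rule bexI)
    show "pclass R (inv_word a) \<otimes>\<^bsub>pres_group S R\<^esub> x = \<one>\<^bsub>pres_group S R\<^esub>"
      using a by (simp add: pres_group_one pclass_eq_iff pres_eq_inv_word_append)
    show "pclass R (inv_word a) \<in> carrier (pres_group S R)"
      using a(1) inv_word_lists_iff[of a S] unfolding pres_group_carrier by blast
  qed
qed (fastforce simp: pres_group_carrier pres_group_one intro!: imageI)+

lemma pres_group_inv:
  "a \<in> lists (UNIV \<times> S) \<Longrightarrow> inv\<^bsub>pres_group S R\<^esub> (pclass R a) = pclass R (inv_word a)"
  by (rule group.inv_equality[OF group_pres_group])
    (use inv_word_lists_iff[of a S] in \<open>auto simp: pres_group_carrier pres_group_one pclass_eq_iff
      pres_eq_inv_word_append\<close>)

section \<open>Following strands through braid words\<close>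

fun track :: "nat \<Rightarrow> bgen word \<Rightarrow> nat" where
  "track p [] = p"
| "track p ((b, Sg i) # w) = track (transpose i (i + 1) p) w"
| "track p ((b, Ag k) # w) = track p w"

lemma track_append [simp]: "track p (x @ y) = track (track p x) y"
  by (induction p x rule: track.induct) auto

lemma forget_append: "forget p (x @ y) = forget p x @ forget (track p x) y"
  by (induction p x rule: track.induct) (auto simp: transpose_def)

lemma strand_append: "strand p (x @ y) = strand p x @ strand (track p x) y"
  by (induction p x rule: track.induct) (auto simp: transpose_def)

lemma track_inv_word [simp]: "track (track p w) (inv_word w) = p"
  by (induction p w rule: track.induct) auto

lemma forget_inv_word: "forget (track p w) (inv_word w) = inv_word (forget p w)"
  by (induction p w rule: track.induct) (auto simp: forget_append transpose_def)

lemma strand_inv_word: "strand (track p w) (inv_word w) = inv_word (strand p w)"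
  by (induction p w rule: track.induct) (auto simp: strand_append transpose_def)

lemma perm_word_append: "perm_word (x @ y) = perm_word x \<circ> perm_word y"
  by (induction x rule: perm_word.induct) auto

lemma perm_word_track: "perm_word w (track p w) = p"
  by (induction p w rule: track.induct) auto

lemma track_perm_word: "track (perm_word w p) w = p"
  by (induction w arbitrary: p rule: perm_word.induct) auto

lemma perm_word_eq_id_iff: "perm_word w = id \<longleftrightarrow> (\<forall>p. track p w = p)"
  by (metis eq_id_iff perm_word_track track_perm_word)

lemma perm_word_inv_word_eq_id: "perm_word w = id \<Longrightarrow> perm_word (inv_word w) = id"
  by (metis perm_word_eq_id_iff track_inv_word)

lemma braid_gens_Sg [simp]: "Sg i \<in> braid_gens g n \<longleftrightarrow> 1 \<le> i \<and> i \<le> n - 1"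
  by (auto simp: braid_gens_def)

lemma braid_gens_Ag [simp]: "Ag k \<in> braid_gens g n \<longleftrightarrow> 1 \<le> k \<and> k \<le> 2 * g"
  by (auto simp: braid_gens_def)

lemma track_in_range:
  "w \<in> lists (UNIV \<times> braid_gens g n) \<Longrightarrow> p \<in> {1..n} \<Longrightarrow> track p w \<in> {1..n}"
  by (induction p w rule: track.induct) (auto simp: transpose_def)

lemma prodw_Nil [simp]: "prodw f [] = []"
  by (simp add: prodw_def)

lemma prodw_Cons [simp]: "prodw f (x # xs) = f x @ prodw f xs"
  by (simp add: prodw_def)

lemma prodw_append [simp]: "prodw f (xs @ ys) = prodw f xs @ prodw f ys"
  by (simp add: prodw_def)

lemma inv_word_sw: "inv_word (sw i) = swi i"
  by (simp add: sw_def swi_def)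

lemma inv_word_aw: "inv_word (aw k) = awi k"
  by (simp add: aw_def awi_def)

lemma inv_word_prodw_sw: "inv_word (prodw sw xs) = prodw swi (rev xs)"
  by (induction xs) (auto simp: inv_word_sw)

lemma track_sw [simp]: "track p (sw i) = transpose i (i + 1) p"
  by (simp add: sw_def)

lemma track_swi [simp]: "track p (swi i) = transpose i (i + 1) p"
  by (simp add: swi_def)

lemma track_aw [simp]: "track p (aw k) = p"
  by (simp add: aw_def)

lemma track_awi [simp]: "track p (awi k) = p"
  by (simp add: awi_def)

lemma forget_sw [simp]:
  "forget p (sw i) = (if p = i \<or> p = i + 1 then [] else sw (if i < p then i else i - 1))"
  by (simp add: sw_def)

lemma forget_swi [simp]:
  "forget p (swi i) = (if p = i \<or> p = i + 1 then [] else swi (if i < p then i else i - 1))"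
  by (simp add: swi_def)

lemma forget_aw [simp]: "forget p (aw k) = (if p = 1 then [] else aw k)"
  by (simp add: aw_def)

lemma forget_awi [simp]: "forget p (awi k) = (if p = 1 then [] else awi k)"
  by (simp add: awi_def)

lemma strand_sw [simp]: "strand p (sw i) = []"
  by (simp add: sw_def)

lemma strand_swi [simp]: "strand p (swi i) = []"
  by (simp add: swi_def)

lemma strand_aw [simp]: "strand p (aw k) = (if p = 1 then [(True, k)] else [])"
  by (simp add: aw_def)

lemma strand_awi [simp]: "strand p (awi k) = (if p = 1 then [(False, k)] else [])"
  by (simp add: awi_def)

lemma track_prodw_aw [simp]: "track p (prodw aw xs) = p"
  by (induction xs) auto

lemma track_prodw_awi [simp]: "track p (prodw awi xs) = p"
  by (induction xs) auto

lemma forget_prodw_aw [simp]: "forget p (prodw aw xs) = (if p = 1 then [] else prodw aw xs)"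
  by (induction xs) (auto simp: forget_append)

lemma forget_prodw_awi [simp]: "forget p (prodw awi xs) = (if p = 1 then [] else prodw awi xs)"
  by (induction xs) (auto simp: forget_append)

lemma strand_prodw_aw [simp]:
  "strand p (prodw aw xs) = (if p = 1 then prodw (\<lambda>k. [(True, k)]) xs else [])"
  by (induction xs) (auto simp: strand_append)

lemma strand_prodw_awi [simp]:
  "strand p (prodw awi xs) = (if p = 1 then prodw (\<lambda>k. [(False, k)]) xs else [])"
  by (induction xs) (auto simp: strand_append)

lemma strand_prodw_sw [simp]: "strand p (prodw sw xs) = []"
  by (induction xs arbitrary: p) (auto simp: strand_append)

lemma track_prodw_sw_upt:
  "a \<le> b \<Longrightarrow> track p (prodw sw [a..<b]) = (if p = a then b else if a < p \<and> p \<le> b then p - 1 else p)"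
  by (induction b) (auto simp: le_Suc_eq transpose_def)

lemma track_prodw_sw_rev_upt:
  "a \<le> b \<Longrightarrow> track p (prodw sw (rev [a..<b])) = (if p = b then a else if a \<le> p \<and> p < b then p + 1 else p)"
  by (induction b arbitrary: p) (auto simp: le_Suc_eq transpose_def)

lemma forget_prodw_sw_upt:
  "a \<le> b \<Longrightarrow> forget p (prodw sw [a..<b]) =
     (if p < a then prodw sw [a - 1..<b - 1] else if p = a then []
      else if p \<le> b then prodw sw [a..<b - 1] else prodw sw [a..<b])"
proof (induction b)
  case (Suc b)
  show ?case
  proof (cases "a = Suc b")
    case False
    then have "a \<le> b" using Suc by simp
    moreover have "0 < b \<Longrightarrow> c \<le> b - 1 \<Longrightarrow> prodw sw [c..<b - 1] @ sw (b - 1) = prodw sw [c..<b]" for c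
      by (cases b) auto
    ultimately show ?thesis
      using Suc.IH by (auto simp: forget_append track_prodw_sw_upt transpose_def)
  qed simp
qed simp

lemma forget_prodw_sw_rev_upt:
  "a \<le> b \<Longrightarrow> forget p (prodw sw (rev [a..<b])) =
     (if p < a then prodw sw (rev [a - 1..<b - 1]) else if p < b then prodw sw (rev [a..<b - 1])
      else if p = b then [] else prodw sw (rev [a..<b]))"
proof (induction b arbitrary: p)
  case (Suc b)
  show ?case
  proof (cases "a = Suc b")
    case False
    then have "a \<le> b" using Suc by simp
    moreover have "0 < b \<Longrightarrow> c \<le> b - 1 \<Longrightarrow> sw (b - 1) @ prodw sw (rev [c..<b - 1]) = prodw sw (rev [c..<b])" for c
      by (cases b) auto
    ultimately show ?thesis
      using Suc.IH by (auto simp: forget_append transpose_def)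
  qed simp
qed simp

lemma surf_rhs_eq:
  "2 \<le> n \<Longrightarrow> surf_rhs n = prodw sw [1..<n - 1] @ sw (n - 1) @ sw (n - 1) @ prodw sw (rev [1..<n - 1])"
  by (simp add: surf_rhs_def)

lemma track_surf_rhs [simp]: "track p (surf_rhs n) = p"
proof (cases "2 \<le> n")
  case True
  then show ?thesis by (auto simp: surf_rhs_eq track_prodw_sw_upt track_prodw_sw_rev_upt transpose_def)
qed (simp add: surf_rhs_def)

lemma forget_surf_rhs:
  assumes n: "2 \<le> n" and p: "1 \<le> p" "p \<le> n"
  shows "forget p (surf_rhs n) = (if p = 1 then [] else surf_rhs (n - 1))"
proof -
  consider "p = 1" | "1 < p" "p < n" | "p = n" "n = 2" | "p = n" "3 \<le> n"
    using p n by linarith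
  then show ?thesis
  proof cases
    case 1
    then show ?thesis using n
      by (simp add: surf_rhs_eq forget_append forget_prodw_sw_upt forget_prodw_sw_rev_upt
          track_prodw_sw_upt transpose_def)
  next
    case 2
    then show ?thesis using n surf_rhs_eq[of "n - 1"]
      by (simp add: surf_rhs_eq forget_append forget_prodw_sw_upt forget_prodw_sw_rev_upt
          track_prodw_sw_upt transpose_def numeral_2_eq_2)
  next
    case 3
    then show ?thesis by (simp add: surf_rhs_def sw_def)
  next
    case 4
    then obtain m where m: "n = m + 3" using le_Suc_ex[of 3 n] by (auto simp: add.commute)
    have "prodw sw [1..<n - 1] = prodw sw [1..<m + 1] @ sw (m + 1)"
      and "prodw sw (rev [1..<n - 1]) = sw (m + 1) @ prodw sw (rev [1..<m + 1])"
      using m by simp_all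
    then show ?thesis using 4 m surf_rhs_eq[of "n - 1"]
      by (simp add: surf_rhs_eq forget_append forget_prodw_sw_upt forget_prodw_sw_rev_upt
          track_prodw_sw_upt transpose_def)
  qed
qed

lemma braid_rels_far:
  "1 \<le> i \<Longrightarrow> i \<le> n - 1 \<Longrightarrow> 1 \<le> j \<Longrightarrow> j \<le> n - 1 \<Longrightarrow> i + 2 \<le> j \<or> j + 2 \<le> i \<Longrightarrow>
   (sw i @ sw j, sw j @ sw i) \<in> braid_rels g n"
  unfolding braid_rels_def by blast

lemma braid_rels_braid:
  "1 \<le> i \<Longrightarrow> j = i + 1 \<Longrightarrow> j \<le> n - 1 \<Longrightarrow> (sw i @ sw j @ sw i, sw j @ sw i @ sw j) \<in> braid_rels g n"
  unfolding braid_rels_def by blast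

lemma braid_rels_surface: "(prodw aw [1..<2*g+1] @ prodw awi [1..<2*g+1], surf_rhs n) \<in> braid_rels g n"
  unfolding braid_rels_def by blast

lemma braid_rels_a_A2:
  "2 \<le> n \<Longrightarrow> r \<in> {1..2*g} \<Longrightarrow> s \<in> {1..2*g} \<Longrightarrow> r \<noteq> s \<Longrightarrow> (aw r @ A2w g s, A2w g s @ aw r) \<in> braid_rels g n"
  unfolding braid_rels_def by blast

lemma braid_rels_prod_A2:
  "2 \<le> n \<Longrightarrow> r \<in> {1..2*g} \<Longrightarrow>
   (prodw aw [1..<r+1] @ A2w g r, sw 1 @ sw 1 @ A2w g r @ prodw aw [1..<r+1]) \<in> braid_rels g n"
  unfolding braid_rels_def by blast

lemma braid_rels_a_sigma:
  "r \<in> {1..2*g} \<Longrightarrow> 2 \<le> i \<Longrightarrow> i \<le> n - 1 \<Longrightarrow> (aw r @ sw i, sw i @ aw r) \<in> braid_rels g n"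
  unfolding braid_rels_def by blast

lemma braid_rels_cases:
  assumes "(l, r) \<in> braid_rels g n"
  obtains (far) i j where "l = sw i @ sw j" "r = sw j @ sw i" "1 \<le> i" "i \<le> n - 1" "1 \<le> j" "j \<le> n - 1"
      "i + 2 \<le> j \<or> j + 2 \<le> i"
  | (braid) i where "l = sw i @ sw (i + 1) @ sw i" "r = sw (i + 1) @ sw i @ sw (i + 1)" "1 \<le> i" "i + 1 \<le> n - 1"
  | (surface) "l = prodw aw [1..<2*g+1] @ prodw awi [1..<2*g+1]" "r = surf_rhs n"
  | (a_A2) t s where "l = aw t @ A2w g s" "r = A2w g s @ aw t" "2 \<le> n" "t \<in> {1..2*g}" "s \<in> {1..2*g}" "t \<noteq> s"
  | (prod_A2) t where "l = prodw aw [1..<t+1] @ A2w g t" "r = sw 1 @ sw 1 @ A2w g t @ prodw aw [1..<t+1]"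
      "2 \<le> n" "t \<in> {1..2*g}"
  | (a_sigma) t i where "l = aw t @ sw i" "r = sw i @ aw t" "t \<in> {1..2*g}" "2 \<le> i" "i \<le> n - 1"
  using assms unfolding braid_rels_def by blast

definition A2_core :: "nat \<Rightarrow> nat \<Rightarrow> bgen word" where
  "A2_core g s = prodw aw [1..<s] @ prodw awi [s+1..<2*g+1]"

lemma A2w_eq: "A2w g s = swi 1 @ A2_core g s @ swi 1"
  by (simp add: A2w_def A2_core_def)

lemma track_A2_core [simp]: "track p (A2_core g s) = p"
  by (simp add: A2_core_def del: upt_Suc)

lemma forget_A2_core [simp]: "forget p (A2_core g s) = (if p = 1 then [] else A2_core g s)"
  by (simp add: A2_core_def forget_append del: upt_Suc)

lemma track_A2w [simp]: "track p (A2w g s) = p"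
  by (simp add: A2w_eq transpose_def)

lemma forget_A2w:
  "1 \<le> p \<Longrightarrow> forget p (A2w g s) = (if p = 1 then A2_core g s else if p = 2 then [] else A2w g s)"
  by (auto simp: A2w_eq forget_append transpose_def)

lemma strand_A2w: "strand p (A2w g s) = (if p = 2 then strand 1 (A2_core g s) else [])"
  by (auto simp: A2w_eq strand_append transpose_def A2_core_def)

lemma braid_rels_lists:
  "(l, r) \<in> braid_rels g n \<Longrightarrow> l \<in> lists (UNIV \<times> braid_gens g n) \<and> r \<in> lists (UNIV \<times> braid_gens g n)"
  by (cases rule: braid_rels_cases)
    (auto simp: surf_rhs_def A2w_def sw_def swi_def aw_def awi_def prodw_def simp del: upt_Suc)

lemma track_braid_rels: "(l, r) \<in> braid_rels g n \<Longrightarrow> track p l = track p r"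
  by (cases rule: braid_rels_cases) (auto simp: transpose_def simp del: upt_Suc)

lemma forget_braid_rels:
  assumes "(l, r) \<in> braid_rels g n" "2 \<le> n" "p \<in> {1..n}"
  shows "pres_eq (braid_rels g (n - 1)) (forget p l) (forget p r)"
  using assms(1)
proof (cases rule: braid_rels_cases)
  case (far i j)
  then show ?thesis using assms(2,3)
    by (auto simp: forget_append transpose_def pres_eq.refl intro!: pres_eq_relI braid_rels_far)
next
  case (braid i)
  then show ?thesis using assms(2,3)
    by (auto simp: forget_append transpose_def pres_eq.refl intro!: pres_eq_relI braid_rels_braid)
next
  case surface
  then show ?thesis using assms(2,3) pres_eq_relI[OF braid_rels_surface[of g "n - 1"]]
    by (simp add: forget_append forget_surf_rhs pres_eq.refl del: upt_Suc)
next
  case (a_A2 t s)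
  then show ?thesis using assms(2,3)
    by (auto simp: forget_append forget_A2w pres_eq.refl intro!: pres_eq_relI braid_rels_a_A2)
next
  case (prod_A2 t)
  consider "p = 1" | "p = 2" | "3 \<le> p" using assms(3) by force
  then show ?thesis
  proof cases
    case 3
    then show ?thesis using prod_A2 assms(3) pres_eq_relI[OF braid_rels_prod_A2[of "n - 1" t g]]
      by (simp add: forget_append forget_A2w transpose_def del: upt_Suc)
  qed (use prod_A2 in \<open>simp_all add: forget_append forget_A2w transpose_def pres_eq.refl del: upt_Suc\<close>)
next
  case (a_sigma t i)
  then show ?thesis using assms(2,3)
    by (auto simp: forget_append transpose_def pres_eq.refl intro!: pres_eq_relI braid_rels_a_sigma)
qed

lemma pres_eq_pi_surface_relator:
  "pres_eq (pi_rels g) (prodw (\<lambda>k. [(True, k)]) [1..<2*g+1] @ prodw (\<lambda>k. [(False, k)]) [1..<2*g+1]) []"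
proof -
  let ?xs = "[1..<2*g+1]"
  have inv: "inv_word (prodw (\<lambda>k. [(False, k)]) xs) = prodw (\<lambda>k. [(True, k)]) (rev xs)" for xs :: "nat list"
    by (induct xs) auto
  have "pres_eq (pi_rels g) (prodw (\<lambda>k. [(True, k)]) ?xs @ prodw (\<lambda>k. [(False, k)]) ?xs)
      (prodw (\<lambda>k. [(True, k)]) (rev ?xs) @ prodw (\<lambda>k. [(False, k)]) ?xs)"
    using pres_eq.rel[of _ _ "pi_rels g" "[]" "prodw (\<lambda>k. [(False, k)]) ?xs"]
    by (simp add: pi_rels_def del: upt_Suc)
  then show ?thesis
    using pres_eq_inv_word_append[of "pi_rels g" "prodw (\<lambda>k. [(False, k)]) ?xs"]
    unfolding inv by (rule pres_eq.trans)
qed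

lemma strand_braid_rels:
  assumes "(l, r) \<in> braid_rels g n"
  shows "pres_eq (pi_rels g) (strand p l) (strand p r)"
  using assms
proof (cases rule: braid_rels_cases)
  case surface
  then show ?thesis using pres_eq_pi_surface_relator[of g]
    by (simp add: strand_append surf_rhs_def pres_eq.refl del: upt_Suc)
qed (auto simp: strand_append strand_A2w pres_eq.refl transpose_def simp del: upt_Suc)

text \<open>Free cancellation may insert letters outside the generating set \<open>S\<close>, so the induction
  runs over the words filtered down to \<open>S\<close>.\<close>

lemma filter_snd_in_lists: "filter (\<lambda>x. snd x \<in> S) u \<in> lists (UNIV \<times> S)"
  by auto

lemma filter_snd_lists_id: "u \<in> lists (UNIV \<times> S) \<Longrightarrow> filter (\<lambda>x. snd x \<in> S) u = u"
  by (induction u) auto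

lemma pres_eq_tracked_map_filter:
  fixes f :: "nat \<Rightarrow> bgen word \<Rightarrow> 'c word"
  assumes append: "\<And>p x y. f p (x @ y) = f p x @ f (track p x) y"
    and rels_lists: "\<And>l r. (l, r) \<in> R \<Longrightarrow> l \<in> lists (UNIV \<times> S) \<and> r \<in> lists (UNIV \<times> S)"
    and track_closed: "\<And>p w. p \<in> P \<Longrightarrow> w \<in> lists (UNIV \<times> S) \<Longrightarrow> track p w \<in> P"
    and rels: "\<And>l r p. (l, r) \<in> R \<Longrightarrow> p \<in> P \<Longrightarrow> track p l = track p r \<and> pres_eq R' (f p l) (f p r)"
    and cancel: "\<And>b x p. x \<in> S \<Longrightarrow> p \<in> P \<Longrightarrow> pres_eq R' (f p [(b, x), (\<not> b, x)]) []"
  shows "pres_eq R v w \<Longrightarrow> p \<in> P \<Longrightarrow>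
    pres_eq R' (f p (filter (\<lambda>x. snd x \<in> S) v)) (f p (filter (\<lambda>x. snd x \<in> S) w))"
proof (induction arbitrary: p rule: pres_eq.induct)
  let ?cl = "filter (\<lambda>x. snd x \<in> S)"
  case (cancel u b x v)
  let ?q = "track p (?cl u)"
  show ?case
  proof (cases "x \<in> S")
    case True
    have "track ?q [(b, x), (\<not> b, x)] = ?q"
      by (cases x) (auto simp: transpose_def)
    moreover have "?cl (u @ [(b, x), (\<not> b, x)] @ v) = ?cl u @ [(b, x), (\<not> b, x)] @ ?cl v"
      using True by simp
    ultimately have "f p (?cl (u @ [(b, x), (\<not> b, x)] @ v)) = f p (?cl u) @ f ?q [(b, x), (\<not> b, x)] @ f ?q (?cl v)"
      by (metis append)
    moreover have "pres_eq R' (f p (?cl u) @ f ?q [(b, x), (\<not> b, x)] @ f ?q (?cl v)) (f p (?cl u) @ [] @ f ?q (?cl v))"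
      using track_closed[OF cancel filter_snd_in_lists] True by (intro pres_eq_context assms(5))
    ultimately show ?thesis by (simp add: append)
  qed (simp add: pres_eq.refl)
next
  let ?cl = "filter (\<lambda>x. snd x \<in> S)"
  case (rel l r u v)
  let ?q = "track p (?cl u)"
  have q: "?q \<in> P" using track_closed[OF rel(2) filter_snd_in_lists] .
  have lr: "?cl l = l" "?cl r = r" using rels_lists[OF rel(1)] by (simp_all add: filter_snd_lists_id)
  have "track ?q l = track ?q r" "pres_eq R' (f ?q l) (f ?q r)" using rels[OF rel(1) q] by auto
  then show ?case
    using pres_eq_context[of R' "f ?q l" "f ?q r" "f p (?cl u)" "f (track ?q l) (?cl v)"]
    by (simp add: append lr)
qed (blast intro: pres_eq.refl pres_eq.sym pres_eq.trans)+

lemma pres_eq_tracked_map: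
  fixes f :: "nat \<Rightarrow> bgen word \<Rightarrow> 'c word"
  assumes "\<And>p x y. f p (x @ y) = f p x @ f (track p x) y"
    and "\<And>l r. (l, r) \<in> R \<Longrightarrow> l \<in> lists (UNIV \<times> S) \<and> r \<in> lists (UNIV \<times> S)"
    and "\<And>p w. p \<in> P \<Longrightarrow> w \<in> lists (UNIV \<times> S) \<Longrightarrow> track p w \<in> P"
    and "\<And>l r p. (l, r) \<in> R \<Longrightarrow> p \<in> P \<Longrightarrow> track p l = track p r \<and> pres_eq R' (f p l) (f p r)"
    and "\<And>b x p. x \<in> S \<Longrightarrow> p \<in> P \<Longrightarrow> pres_eq R' (f p [(b, x), (\<not> b, x)]) []"
    and "pres_eq R v w" "v \<in> lists (UNIV \<times> S)" "w \<in> lists (UNIV \<times> S)" "p \<in> P"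
  shows "pres_eq R' (f p v) (f p w)"
  using pres_eq_tracked_map_filter[OF assms(1-5,6,9)] assms(7,8) by (simp add: filter_snd_lists_id)

lemma forget_cancel_pair: "pres_eq R (forget p [(b, x), (\<not> b, x)]) []"
  by (cases x) (auto simp: pres_eq.refl pres_eq_cancel_pair)

lemma strand_cancel_pair: "pres_eq R (strand p [(b, x), (\<not> b, x)]) []"
  by (cases x) (auto simp: pres_eq.refl pres_eq_cancel_pair)

lemma forget_pres_eq:
  assumes "pres_eq (braid_rels g n) v w" "v \<in> bwords g n" "w \<in> bwords g n" "2 \<le> n" "p \<in> {1..n}"
  shows "pres_eq (braid_rels g (n - 1)) (forget p v) (forget p w)"
  using forget_append braid_rels_lists track_in_range
  by (rule pres_eq_tracked_map[where P = "{1..n}"])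
    (use assms track_braid_rels forget_braid_rels forget_cancel_pair in \<open>auto simp: bwords_def\<close>)

lemma strand_pres_eq:
  assumes "pres_eq (braid_rels g n) v w" "v \<in> bwords g n" "w \<in> bwords g n"
  shows "pres_eq (pi_rels g) (strand p v) (strand p w)"
  using strand_append braid_rels_lists
  by (rule pres_eq_tracked_map[where P = UNIV])
    (use assms track_braid_rels strand_braid_rels strand_cancel_pair in \<open>auto simp: bwords_def\<close>)

abbreviation bclass :: "nat \<Rightarrow> nat \<Rightarrow> bgen word \<Rightarrow> bgen word set" where
  "bclass g n w \<equiv> pclass (braid_rels g n) w"

lemma group_Bgrp: "group (Bgrp g n)"
  unfolding Bgrp_def by (rule group_pres_group)

lemma Bgrp_mult [simp]: "bclass g n a \<otimes>\<^bsub>Bgrp g n\<^esub> bclass g n b = bclass g n (a @ b)"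
  unfolding Bgrp_def by (rule pres_group_mult)

lemma Bgrp_one: "\<one>\<^bsub>Bgrp g n\<^esub> = bclass g n []"
  unfolding Bgrp_def by (rule pres_group_one)

lemma Bgrp_carrier: "carrier (Bgrp g n) = bclass g n ` bwords g n"
  unfolding Bgrp_def bwords_def by (rule pres_group_carrier)

lemma bclass_in_carrier: "w \<in> bwords g n \<Longrightarrow> bclass g n w \<in> carrier (Bgrp g n)"
  by (simp add: Bgrp_carrier)

lemma Bgrp_inv: "w \<in> bwords g n \<Longrightarrow> inv\<^bsub>Bgrp g n\<^esub> (bclass g n w) = bclass g n (inv_word w)"
  unfolding Bgrp_def bwords_def by (rule pres_group_inv)

lemma bclass_eq_of_rel: "(l, r) \<in> braid_rels g n \<Longrightarrow> bclass g n l = bclass g n r"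
  by (simp add: pclass_eq_iff pres_eq_relI)

lemma bwords_Nil [simp]: "[] \<in> bwords g n"
  by (simp add: bwords_def)

lemma bwords_Cons: "x # w \<in> bwords g n \<longleftrightarrow> x \<in> UNIV \<times> braid_gens g n \<and> w \<in> bwords g n"
  by (simp add: bwords_def)

lemma bwords_append [simp]: "a @ b \<in> bwords g n \<longleftrightarrow> a \<in> bwords g n \<and> b \<in> bwords g n"
  by (simp add: bwords_def)

lemma bwords_inv_word [simp]: "inv_word a \<in> bwords g n \<longleftrightarrow> a \<in> bwords g n"
  unfolding bwords_def by (rule inv_word_lists_iff)

lemma bwords_sw [simp]: "sw i \<in> bwords g n \<longleftrightarrow> 1 \<le> i \<and> i \<le> n - 1"
  by (simp add: bwords_def sw_def)

lemma bwords_swi [simp]: "swi i \<in> bwords g n \<longleftrightarrow> 1 \<le> i \<and> i \<le> n - 1"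
  by (simp add: bwords_def swi_def)

lemma bwords_aw [simp]: "aw k \<in> bwords g n \<longleftrightarrow> 1 \<le> k \<and> k \<le> 2 * g"
  by (simp add: bwords_def aw_def)

lemma bwords_awi [simp]: "awi k \<in> bwords g n \<longleftrightarrow> 1 \<le> k \<and> k \<le> 2 * g"
  by (simp add: bwords_def awi_def)

lemma some_rep_in_bclass:
  assumes "w \<in> bwords g n"
  defines "v \<equiv> SOME v. v \<in> bclass g n w \<inter> bwords g n"
  shows "v \<in> bwords g n" "pres_eq (braid_rels g n) w v"
proof -
  have "w \<in> bclass g n w \<inter> bwords g n"
    using assms(1) by (simp add: pclass_def pres_eq.refl)
  then have "v \<in> bclass g n w \<inter> bwords g n"
    unfolding v_def by (rule someI)
  then show "v \<in> bwords g n" "pres_eq (braid_rels g n) w v"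
    by (simp_all add: pclass_def)
qed

lemma rho_bclass:
  assumes "w \<in> bwords g n" "2 \<le> n"
  shows "rho g n (bclass g n w) = bclass g (n - 1) (forget 1 w)"
  using forget_pres_eq[OF some_rep_in_bclass(2) assms(1) some_rep_in_bclass(1), of 1] assms
  unfolding rho_def by (simp add: pclass_eq_iff pres_eq.sym)

lemma phi_bclass:
  assumes "w \<in> bwords g n" "s \<in> {1..n}"
  shows "phi g n (bclass g n w) s = pclass (pi_rels g) (strand s w)"
  using strand_pres_eq[OF some_rep_in_bclass(2) assms(1) some_rep_in_bclass(1), of s] assms
  unfolding phi_def by (simp add: pclass_eq_iff pres_eq.sym)

lemma KE:
  assumes "c \<in> K g n"
  obtains w where "w \<in> bwords g n" "c = bclass g n w" "perm_word w = id"
    "\<And>s. s \<in> {1..n} \<Longrightarrow> pres_eq (pi_rels g) (strand s w) []"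
proof -
  from assms obtain w where w: "w \<in> bwords g n" "c = bclass g n w" "perm_word w = id"
    by (auto simp: K_def PB_def)
  moreover have "pres_eq (pi_rels g) (strand s w) []" if "s \<in> {1..n}" for s
  proof -
    have "phi g n c s = \<one>\<^bsub>pi1 g\<^esub>"
      using assms that by (simp add: K_def)
    then show ?thesis
      using phi_bclass[OF w(1) that] w(2) by (simp add: pi1_def pres_group_one pclass_eq_iff)
  qed
  ultimately show ?thesis using that by blast
qed

lemma KI:
  assumes "w \<in> bwords g n" "perm_word w = id" "\<And>s. s \<in> {1..n} \<Longrightarrow> pres_eq (pi_rels g) (strand s w) []"
  shows "bclass g n w \<in> K g n"
proof -
  have "bclass g n w \<in> PB g n"
    using assms(1,2) unfolding PB_def by blast
  then show ?thesis
    using assms(3) phi_bclass[OF assms(1)] by (simp add: K_def pi1_def pres_group_one pclass_eq_iff)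
qed

lemma K_mult_inv:
  assumes "a \<in> K g n" "c \<in> K g n"
  shows "a \<otimes>\<^bsub>Bgrp g n\<^esub> inv\<^bsub>Bgrp g n\<^esub> c \<in> K g n"
proof -
  obtain v where v: "v \<in> bwords g n" "a = bclass g n v" "perm_word v = id"
    "\<And>s. s \<in> {1..n} \<Longrightarrow> pres_eq (pi_rels g) (strand s v) []"
    using KE[OF assms(1)] by blast
  obtain w where w: "w \<in> bwords g n" "c = bclass g n w" "perm_word w = id"
    "\<And>s. s \<in> {1..n} \<Longrightarrow> pres_eq (pi_rels g) (strand s w) []"
    using KE[OF assms(2)] by blast
  have strand: "strand s (v @ inv_word w) = strand s v @ inv_word (strand s w)" for s
    using v(3) w(3) strand_inv_word[of s w] by (simp add: strand_append perm_word_eq_id_iff)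
  have "bclass g n (v @ inv_word w) \<in> K g n"
  proof (rule KI)
    show "v @ inv_word w \<in> bwords g n" using v(1) w(1) by simp
    show "perm_word (v @ inv_word w) = id"
      using v(3) w(3) by (simp add: perm_word_append perm_word_inv_word_eq_id)
    show "pres_eq (pi_rels g) (strand s (v @ inv_word w)) []" if "s \<in> {1..n}" for s
      unfolding strand using that by (intro pres_eq_Nil_append pres_eq_Nil_inv_word v(4) w(4))
  qed
  then show ?thesis using v w by (simp add: Bgrp_inv)
qed

lemma K_conj:
  assumes "x \<in> bwords g n" "c \<in> K g n"
  shows "bclass g n x \<otimes>\<^bsub>Bgrp g n\<^esub> c \<otimes>\<^bsub>Bgrp g n\<^esub> inv\<^bsub>Bgrp g n\<^esub> (bclass g n x) \<in> K g n"
proof -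
  obtain w where w: "w \<in> bwords g n" "c = bclass g n w" "perm_word w = id"
    "\<And>s. s \<in> {1..n} \<Longrightarrow> pres_eq (pi_rels g) (strand s w) []"
    using KE[OF assms(2)] by blast
  have strand: "strand s (x @ w @ inv_word x) = strand s x @ strand (track s x) w @ inv_word (strand s x)" for s
    using w(3) strand_inv_word[of s x] by (simp add: strand_append perm_word_eq_id_iff)
  have "bclass g n (x @ w @ inv_word x) \<in> K g n"
  proof (rule KI)
    show "x @ w @ inv_word x \<in> bwords g n" using assms(1) w(1) by simp
    show "perm_word (x @ w @ inv_word x) = id"
      using w(3) by (simp add: perm_word_eq_id_iff)
    show "pres_eq (pi_rels g) (strand s (x @ w @ inv_word x)) []" if "s \<in> {1..n}" for s
      using track_in_range[of x g n s] assms(1) that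
      unfolding strand by (intro pres_eq_Nil_conj w(4)) (simp add: bwords_def)
  qed
  then show ?thesis using assms(1) w by (simp add: Bgrp_inv)
qed

lemma mult_inv_in_F:
  assumes n: "2 \<le> n" and a: "a \<in> K g n" and c: "c \<in> K g n" and rho: "rho g n a = rho g n c"
  shows "a \<otimes>\<^bsub>Bgrp g n\<^esub> inv\<^bsub>Bgrp g n\<^esub> c \<in> F g n"
proof -
  obtain v where v: "v \<in> bwords g n" "a = bclass g n v" "perm_word v = id"
    using a by (rule KE)
  obtain w where w: "w \<in> bwords g n" "c = bclass g n w" "perm_word w = id"
    using c by (rule KE)
  have "forget 1 (v @ inv_word w) = forget 1 v @ inv_word (forget 1 w)"
    using v(3) w(3) forget_inv_word[of 1 w] by (simp add: forget_append perm_word_eq_id_iff)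
  then have "rho g n (a \<otimes>\<^bsub>Bgrp g n\<^esub> inv\<^bsub>Bgrp g n\<^esub> c) = bclass g (n - 1) (forget 1 v @ inv_word (forget 1 w))"
    using v w n by (simp add: Bgrp_inv rho_bclass)
  also have "\<dots> = bclass g (n - 1) (forget 1 w @ inv_word (forget 1 w))"
    using rho v w n by (simp add: rho_bclass flip: Bgrp_mult)
  also have "\<dots> = \<one>\<^bsub>Bgrp g (n - 1)\<^esub>"
    by (simp add: Bgrp_one pclass_eq_iff pres_eq_append_inv_word)
  finally show ?thesis using K_mult_inv[OF a c] by (simp add: F_def)
qed

lemma K_subset_carrier: "K g n \<subseteq> carrier (Bgrp g n)"
  by (auto simp: K_def PB_def bclass_in_carrier)

section \<open>Telescoping with the relations \<open>a\<^sub>r A\<^sub>2\<^sub>s = A\<^sub>2\<^sub>s a\<^sub>r\<close>\<close>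

definition centralizer :: "('a, 'b) monoid_scheme \<Rightarrow> 'a \<Rightarrow> 'a set" where
  "centralizer G a = {x \<in> carrier G. a \<otimes>\<^bsub>G\<^esub> x = x \<otimes>\<^bsub>G\<^esub> a}"

definition mprod :: "('a, 'b) monoid_scheme \<Rightarrow> 'a list \<Rightarrow> 'a" where
  "mprod G xs = foldr (\<otimes>\<^bsub>G\<^esub>) xs \<one>\<^bsub>G\<^esub>"

lemma mprod_Nil [simp]: "mprod G [] = \<one>\<^bsub>G\<^esub>"
  by (simp add: mprod_def)

lemma mprod_Cons [simp]: "mprod G (x # xs) = x \<otimes>\<^bsub>G\<^esub> mprod G xs"
  by (simp add: mprod_def)

context group
begin

lemma mprod_closed [simp]: "set xs \<subseteq> carrier G \<Longrightarrow> mprod G xs \<in> carrier G"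
  by (induction xs) auto

lemma mprod_append: "set xs \<subseteq> carrier G \<Longrightarrow> set ys \<subseteq> carrier G \<Longrightarrow> mprod G (xs @ ys) = mprod G xs \<otimes> mprod G ys"
  by (induction xs) (auto simp: m_assoc)

lemma inv_mult_cancel_left [simp]: "x \<in> carrier G \<Longrightarrow> y \<in> carrier G \<Longrightarrow> inv x \<otimes> (x \<otimes> y) = y"
  by (simp add: m_assoc[symmetric])

lemma mult_inv_cancel_left [simp]: "x \<in> carrier G \<Longrightarrow> y \<in> carrier G \<Longrightarrow> x \<otimes> (inv x \<otimes> y) = y"
  by (simp add: m_assoc[symmetric])

lemma conj_inv:
  assumes "x \<in> carrier G" "t \<in> carrier G" "t' \<in> carrier G" "x \<otimes> t' = t \<otimes> x"
  shows "inv x \<otimes> t = t' \<otimes> inv x"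
proof -
  have "inv x \<otimes> t = inv x \<otimes> (t \<otimes> x) \<otimes> inv x"
    using assms by (simp add: m_assoc)
  also have "\<dots> = t' \<otimes> inv x"
    using assms by (simp add: m_assoc flip: assms(4))
  finally show ?thesis .
qed

lemma subgroup_centralizer: "a \<in> carrier G \<Longrightarrow> subgroup (centralizer G a) G"
proof (rule subgroupI)
  fix x y assume a: "a \<in> carrier G" and x: "x \<in> centralizer G a" and y: "y \<in> centralizer G a"
  then show "x \<otimes> y \<in> centralizer G a"
    by (auto simp: centralizer_def m_assoc[symmetric]) (simp add: m_assoc)
  show "inv x \<in> centralizer G a"
    using a x conj_inv[of x a a] by (auto simp: centralizer_def)
qed (auto simp: centralizer_def)

lemma telescope_in_subgroup:
  assumes H: "subgroup H G" and f: "\<And>i. f i \<in> carrier G"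
    and steps: "\<And>l. l < m \<Longrightarrow> f l \<otimes> inv (f (Suc l)) \<in> H"
  shows "f 0 \<otimes> inv (f m) \<in> H"
  using steps
proof (induction m)
  case 0
  show ?case using f subgroup.one_closed[OF H] by simp
next
  case (Suc m)
  have "f 0 \<otimes> inv (f (Suc m)) = (f 0 \<otimes> inv (f m)) \<otimes> (f m \<otimes> inv (f (Suc m)))"
    using f by (simp add: m_assoc)
  then show ?case using Suc subgroup.m_closed[OF H] by simp
qed

lemma twisted_commute:
  assumes "a \<in> carrier G" "e \<in> carrier G" and comm: "a \<otimes> (e \<otimes> a \<otimes> e) = (e \<otimes> a \<otimes> e) \<otimes> a"
  shows "(a \<otimes> e \<otimes> a \<otimes> e) \<otimes> e = e \<otimes> (a \<otimes> e \<otimes> a \<otimes> e)"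
proof -
  have "e \<otimes> (a \<otimes> e \<otimes> a \<otimes> e) = ((e \<otimes> a \<otimes> e) \<otimes> a) \<otimes> e"
    using assms(1,2) by (simp add: m_assoc)
  also have "\<dots> = (a \<otimes> (e \<otimes> a \<otimes> e)) \<otimes> e"
    by (simp flip: comm)
  also have "\<dots> = (a \<otimes> e \<otimes> a \<otimes> e) \<otimes> e"
    using assms(1,2) by (simp add: m_assoc)
  finally show ?thesis ..
qed

lemma commute_square:
  assumes "x \<in> carrier G" "y \<in> carrier G" and comm: "x \<otimes> y = y \<otimes> x"
  shows "x \<otimes> (y \<otimes> y) = (y \<otimes> y) \<otimes> x"
proof -
  have "x \<otimes> (y \<otimes> y) = (x \<otimes> y) \<otimes> y"
    using assms(1,2) by (simp add: m_assoc)
  also have "\<dots> = y \<otimes> (x \<otimes> y)"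
    using assms(1,2) by (simp add: m_assoc comm)
  also have "\<dots> = (y \<otimes> y) \<otimes> x"
    using assms(1,2) by (simp add: m_assoc comm)
  finally show ?thesis .
qed

lemma braid_relation_twist:
  assumes "s \<in> carrier G" "t \<in> carrier G" and braid: "s \<otimes> t \<otimes> s = t \<otimes> s \<otimes> t"
  shows "t \<otimes> s \<otimes> (t \<otimes> t) = (s \<otimes> s) \<otimes> (t \<otimes> s)"
proof -
  have "t \<otimes> s \<otimes> (t \<otimes> t) = (t \<otimes> s \<otimes> t) \<otimes> t"
    using assms(1,2) by (simp add: m_assoc)
  also have "\<dots> = (s \<otimes> t \<otimes> s) \<otimes> t"
    by (simp flip: braid)
  also have "\<dots> = s \<otimes> (t \<otimes> s \<otimes> t)"
    using assms(1,2) by (simp add: m_assoc)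
  also have "\<dots> = s \<otimes> (s \<otimes> t \<otimes> s)"
    by (simp flip: braid)
  also have "\<dots> = (s \<otimes> s) \<otimes> (t \<otimes> s)"
    using assms(1,2) by (simp add: m_assoc)
  finally show ?thesis .
qed

lemma conj_commute:
  assumes "x \<in> carrier G" "d \<in> carrier G" "t \<in> carrier G" and comm: "d \<otimes> t = t \<otimes> d"
  shows "(x \<otimes> d \<otimes> inv x) \<otimes> (x \<otimes> t \<otimes> inv x) = (x \<otimes> t \<otimes> inv x) \<otimes> (x \<otimes> d \<otimes> inv x)"
proof -
  have "(x \<otimes> d \<otimes> inv x) \<otimes> (x \<otimes> t \<otimes> inv x) = x \<otimes> (d \<otimes> t) \<otimes> inv x"
    using assms(1-3) by (simp add: m_assoc)
  also have "\<dots> = (x \<otimes> t \<otimes> inv x) \<otimes> (x \<otimes> d \<otimes> inv x)"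
    using assms(1-3) by (simp add: m_assoc comm)
  finally show ?thesis .
qed

lemma conj_mult_inv_eq:
  assumes "b \<in> carrier G" "c \<in> carrier G" "u \<in> carrier G" and comm: "c \<otimes> u = u \<otimes> c"
  shows "(b \<otimes> inv c) \<otimes> u \<otimes> inv (b \<otimes> inv c) = b \<otimes> u \<otimes> inv b"
proof -
  have "(b \<otimes> inv c) \<otimes> u \<otimes> inv (b \<otimes> inv c) = b \<otimes> (inv c \<otimes> (u \<otimes> c)) \<otimes> inv b"
    using assms(1-3) by (simp add: m_assoc inv_mult_group)
  also have "\<dots> = b \<otimes> u \<otimes> inv b"
    using assms(1-3) by (simp flip: comm)
  finally show ?thesis .
qed

end

text \<open>Since \<open>A2 t \<otimes> inv (A2 (t + 1))\<close> is conjugate to a quotient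
  of prefixes (\<open>A2_ratio\<close>), suitable products of the \<open>A2 t\<close> with \<open>t \<noteq> k\<close> telescope, which puts
  \<open>s\<^sup>-\<^sup>1 a\<^sub>k\<^sup>\<plusminus>\<^sup>1 s\<^sup>-\<^sup>1\<close> into the centralizer of \<open>a\<^sub>k\<close>.\<close>

locale surface_relators = group G for G (structure) +
  fixes s :: 'a and a :: "nat \<Rightarrow> 'a" and g k :: nat
  assumes s_closed: "s \<in> carrier G" and a_closed: "\<And>i. a i \<in> carrier G"
    and k: "k \<in> {1..2*g}"
    and commute_A2: "\<And>t. t \<in> {1..2*g} \<Longrightarrow> t \<noteq> k \<Longrightarrow>
      inv s \<otimes> (mprod G (map a [1..<t]) \<otimes> mprod G (map (\<lambda>i. inv (a i)) [t+1..<2*g+1])) \<otimes> inv s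
        \<in> centralizer G (a k)"
begin

definition prefix :: "nat \<Rightarrow> 'a" where "prefix i = mprod G (map a [1..<Suc i])"
definition inv_suffix :: "nat \<Rightarrow> 'a" where "inv_suffix i = mprod G (map (\<lambda>j. inv (a j)) [i..<2*g+1])"
definition A2 :: "nat \<Rightarrow> 'a" where "A2 t = inv s \<otimes> (prefix (t - 1) \<otimes> inv_suffix (t + 1)) \<otimes> inv s"
definition conj_prefix :: "nat \<Rightarrow> 'a" where "conj_prefix i = inv s \<otimes> prefix i \<otimes> s"

abbreviation C :: "'a set" where "C \<equiv> centralizer G (a k)"

declare s_closed [simp] a_closed [simp]

lemma k_bounds: "1 \<le> k" "k \<le> 2*g"
  using k by auto

lemma subgroup_C: "subgroup C G"
  by (rule subgroup_centralizer[OF a_closed])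

lemma prefix_closed [simp]: "prefix i \<in> carrier G"
  by (simp add: prefix_def image_subset_iff del: upt_Suc)

lemma inv_suffix_closed [simp]: "inv_suffix i \<in> carrier G"
  by (simp add: inv_suffix_def image_subset_iff del: upt_Suc)

lemma conj_prefix_closed [simp]: "conj_prefix i \<in> carrier G"
  by (simp add: conj_prefix_def)

lemma prefix_0: "prefix 0 = \<one>"
  by (simp add: prefix_def)

lemma prefix_Suc: "prefix (Suc i) = prefix i \<otimes> a (Suc i)"
proof -
  have "[1..<Suc (Suc i)] = [1..<Suc i] @ [Suc i]"
    by simp
  then show ?thesis
    by (simp add: prefix_def mprod_append image_subset_iff del: upt_Suc)
qed

lemma inv_suffix_last: "inv_suffix (Suc (2*g)) = \<one>"
  by (simp add: inv_suffix_def)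

lemma inv_suffix_eq: "i \<le> 2*g \<Longrightarrow> inv_suffix i = inv (a i) \<otimes> inv_suffix (Suc i)"
  by (simp add: inv_suffix_def upt_rec)

lemma A2_in_C: "t \<in> {1..2*g} \<Longrightarrow> t \<noteq> k \<Longrightarrow> A2 t \<in> C"
  using commute_A2[of t] by (simp add: A2_def prefix_def inv_suffix_def)

lemma A2_ratio: "1 \<le> t \<Longrightarrow> t + 1 \<le> 2*g \<Longrightarrow> A2 t \<otimes> inv (A2 (t + 1)) = conj_prefix (t - 1) \<otimes> inv (conj_prefix (t + 1))"
proof -
  assume t: "1 \<le> t" "t + 1 \<le> 2*g"
  have "prefix (t - 1) \<otimes> inv_suffix (t + 1) = prefix (t - 1) \<otimes> (inv (a (t + 1)) \<otimes> inv_suffix (t + 2))"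
    and "prefix t \<otimes> inv_suffix (t + 2) = prefix (t - 1) \<otimes> a t \<otimes> inv_suffix (t + 2)"
    and "prefix (t + 1) = prefix (t - 1) \<otimes> a t \<otimes> a (t + 1)"
    using t inv_suffix_eq[of "t + 1"] prefix_Suc[of t] prefix_Suc[of "t - 1"] by simp_all
  then show ?thesis
    using t by (simp add: A2_def conj_prefix_def m_assoc inv_mult_group)
qed

lemma conj_prefix_step_in_C:
  "t \<in> {1..2*g} - {k} \<Longrightarrow> t + 1 \<in> {1..2*g} - {k} \<Longrightarrow> conj_prefix (t - 1) \<otimes> inv (conj_prefix (t + 1)) \<in> C"
proof -
  assume "t \<in> {1..2*g} - {k}" "t + 1 \<in> {1..2*g} - {k}"
  then have "A2 t \<otimes> inv (A2 (t + 1)) \<in> C"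
    using A2_in_C subgroup.m_closed[OF subgroup_C] subgroup.m_inv_closed[OF subgroup_C] by simp
  then show ?thesis
    using A2_ratio \<open>t \<in> {1..2*g} - {k}\<close> \<open>t + 1 \<in> {1..2*g} - {k}\<close> by simp
qed

lemma conj_prefix_telescope:
  assumes "\<And>l. l < m \<Longrightarrow> i + 2 * l + 1 \<in> {1..2*g} - {k} \<and> i + 2 * l + 2 \<in> {1..2*g} - {k}"
  shows "conj_prefix i \<otimes> inv (conj_prefix (i + 2 * m)) \<in> C"
  using telescope_in_subgroup[OF subgroup_C, of "\<lambda>l. conj_prefix (i + 2 * l)" m]
    conj_prefix_step_in_C[of "i + 2 * _ + 1"] assms by (simp add: add.assoc)

lemma inv_s_a_inv_s_in_C: "odd k \<Longrightarrow> inv s \<otimes> a k \<otimes> inv s \<in> C"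
proof -
  assume odd: "odd k"
  then obtain m where m: "k = 2 * m + 1"
    by atomize_elim presburger
  obtain m' where m': "2*g - 1 = k + 2 * m'"
    using odd k_bounds by atomize_elim presburger
  have "conj_prefix 0 \<otimes> inv (conj_prefix (0 + 2 * m)) \<in> C"
    by (rule conj_prefix_telescope) (use m k_bounds in auto)
  moreover have "conj_prefix k \<otimes> inv (conj_prefix (k + 2 * m')) \<in> C"
    by (rule conj_prefix_telescope) (use m' k_bounds odd in auto)
  moreover have "A2 (2*g) \<in> C"
    using k odd by (intro A2_in_C) auto
  moreover have "conj_prefix 0 \<otimes> inv (conj_prefix (0 + 2 * m)) \<otimes> (conj_prefix k \<otimes> inv (conj_prefix (k + 2 * m'))) \<otimes> A2 (2*g) = inv s \<otimes> a k \<otimes> inv s"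
    using k_bounds prefix_Suc[of "2 * m"] m m' by (simp add: conj_prefix_def A2_def prefix_0 inv_suffix_last m_assoc inv_mult_group)
  ultimately show ?thesis
    using subgroup.m_closed[OF subgroup_C] by metis
qed

lemma s_inv_suffix_inv_s_in_C: "even k \<Longrightarrow> s \<otimes> inv (inv_suffix (k + 1)) \<otimes> inv s \<in> C"
proof (cases "k = 2*g")
  case True
  then show ?thesis using subgroup.one_closed[OF subgroup_C] by (simp add: inv_suffix_last)
next
  case False
  assume even: "even k"
  then have "k + 2 \<le> 2*g" using False k_bounds by presburger
  obtain m' where m': "2*g - 1 = k + 1 + 2 * m'"
    using even False k_bounds by atomize_elim presburger
  have "inv (A2 (k + 1)) \<in> C"
    using \<open>k + 2 \<le> 2*g\<close> even A2_in_C[of "k + 1"] subgroup.m_inv_closed[OF subgroup_C] by simp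
  moreover have "conj_prefix (k + 1) \<otimes> inv (conj_prefix (k + 1 + 2 * m')) \<in> C"
    by (rule conj_prefix_telescope) (use m' even in auto)
  moreover have "A2 (2*g) \<in> C"
    using False k_bounds by (intro A2_in_C) auto
  moreover have "inv (A2 (k + 1)) \<otimes> (conj_prefix (k + 1) \<otimes> inv (conj_prefix (k + 1 + 2 * m'))) \<otimes> A2 (2*g) = s \<otimes> inv (inv_suffix (k + 1)) \<otimes> inv s"
    using \<open>k + 2 \<le> 2*g\<close> prefix_Suc[of k] inv_suffix_eq[of "k + 1"] m'
    by (simp add: conj_prefix_def A2_def inv_suffix_last m_assoc inv_mult_group)
  ultimately show ?thesis
    using subgroup.m_closed[OF subgroup_C] by metis
qed

lemma inv_s_inv_a_inv_s_in_C: "even k \<Longrightarrow> inv s \<otimes> inv (a k) \<otimes> inv s \<in> C"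
proof -
  assume even: "even k"
  then obtain m where m: "k = 2 * m + 2"
    using k_bounds by atomize_elim presburger
  have "conj_prefix 0 \<otimes> inv (conj_prefix (0 + 2 * m)) \<in> C"
    by (rule conj_prefix_telescope) (use m k_bounds in auto)
  moreover have "A2 (k - 1) \<in> C"
    using m k_bounds by (intro A2_in_C) auto
  moreover have "s \<otimes> inv (inv_suffix (k + 1)) \<otimes> inv s \<in> C"
    using even by (rule s_inv_suffix_inv_s_in_C)
  moreover have "conj_prefix 0 \<otimes> inv (conj_prefix (0 + 2 * m)) \<otimes> A2 (k - 1) \<otimes> (s \<otimes> inv (inv_suffix (k + 1)) \<otimes> inv s) = inv s \<otimes> inv (a k) \<otimes> inv s"
    using m k_bounds inv_suffix_eq[of k] by (simp add: conj_prefix_def A2_def prefix_0 m_assoc inv_mult_group)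
  ultimately show ?thesis
    using subgroup.m_closed[OF subgroup_C] by metis
qed

lemma twisted_generator_in_C:
  defines "e \<equiv> if odd k then inv s else s"
  shows "e \<otimes> a k \<otimes> e \<in> C"
proof (cases "odd k")
  case False
  then have "e \<otimes> a k \<otimes> e = inv (inv s \<otimes> inv (a k) \<otimes> inv s)"
    by (simp add: e_def m_assoc inv_mult_group)
  then show ?thesis
    using inv_s_inv_a_inv_s_in_C False subgroup.m_inv_closed[OF subgroup_C] by simp
qed (simp add: e_def inv_s_a_inv_s_in_C)

lemma doubled_generator_commute:
  defines "e \<equiv> if odd k then inv s else s"
  shows "(a k \<otimes> e \<otimes> a k \<otimes> e) \<otimes> s = s \<otimes> (a k \<otimes> e \<otimes> a k \<otimes> e)"
proof -
  have e: "e \<in> carrier G"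
    by (simp add: e_def)
  have "a k \<otimes> (e \<otimes> a k \<otimes> e) = (e \<otimes> a k \<otimes> e) \<otimes> a k"
    using twisted_generator_in_C by (simp add: e_def centralizer_def)
  then have "(a k \<otimes> e \<otimes> a k \<otimes> e) \<otimes> e = e \<otimes> (a k \<otimes> e \<otimes> a k \<otimes> e)"
    using e by (intro twisted_commute) simp_all
  then show ?thesis
    using e conj_inv[of e "a k \<otimes> e \<otimes> a k \<otimes> e" "a k \<otimes> e \<otimes> a k \<otimes> e"]
    by (auto simp: e_def split: if_splits)
qed

end

(* made total by 1 outside {1..2*g}, so that agen g n i lies in the carrier for every i *)
definition agen :: "nat \<Rightarrow> nat \<Rightarrow> nat \<Rightarrow> bgen word set" where
  "agen g n i = (if i \<in> {1..2*g} then bclass g n (aw i) else \<one>\<^bsub>Bgrp g n\<^esub>)"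

lemma agen_closed: "agen g n i \<in> carrier (Bgrp g n)"
  using bclass_in_carrier[of "[]" g n] by (simp add: agen_def Bgrp_one bclass_in_carrier)

lemma bclass_prodw: "bclass g n (prodw f xs) = mprod (Bgrp g n) (map (\<lambda>x. bclass g n (f x)) xs)"
  by (induction xs) (simp_all add: Bgrp_one flip: Bgrp_mult)

lemma bclass_A2w:
  assumes "2 \<le> n" "t \<in> {1..2*g}"
  shows "bclass g n (A2w g t) = inv\<^bsub>Bgrp g n\<^esub> (bclass g n (sw 1)) \<otimes>\<^bsub>Bgrp g n\<^esub>
    (mprod (Bgrp g n) (map (agen g n) [1..<t]) \<otimes>\<^bsub>Bgrp g n\<^esub>
     mprod (Bgrp g n) (map (\<lambda>i. inv\<^bsub>Bgrp g n\<^esub> (agen g n i)) [t+1..<2*g+1])) \<otimes>\<^bsub>Bgrp g n\<^esub>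
    inv\<^bsub>Bgrp g n\<^esub> (bclass g n (sw 1))"
proof -
  have aw: "map (\<lambda>i. bclass g n (aw i)) [1..<t] = map (agen g n) [1..<t]"
    by (rule map_cong) (use assms(2) in \<open>auto simp: agen_def\<close>)
  have awi: "map (\<lambda>i. bclass g n (awi i)) [t+1..<2*g+1] = map (\<lambda>i. inv\<^bsub>Bgrp g n\<^esub> (agen g n i)) [t+1..<2*g+1]"
    by (rule map_cong) (auto simp: agen_def Bgrp_inv inv_word_aw)
  have "bclass g n (A2w g t) = inv\<^bsub>Bgrp g n\<^esub> (bclass g n (sw 1)) \<otimes>\<^bsub>Bgrp g n\<^esub>
    (bclass g n (prodw aw [1..<t]) \<otimes>\<^bsub>Bgrp g n\<^esub> bclass g n (prodw awi [t+1..<2*g+1])) \<otimes>\<^bsub>Bgrp g n\<^esub>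
    inv\<^bsub>Bgrp g n\<^esub> (bclass g n (sw 1))"
    using assms(1) by (simp add: A2w_def Bgrp_inv inv_word_sw del: upt_Suc)
  then show ?thesis
    unfolding bclass_prodw aw awi .
qed

lemma surface_relators_Bgrp:
  assumes "2 \<le> n" "k \<in> {1..2*g}"
  shows "surface_relators (Bgrp g n) (bclass g n (sw 1)) (agen g n) g k"
proof (intro surface_relators.intro surface_relators_axioms.intro group_Bgrp)
  fix t assume t: "t \<in> {1..2*g}" "t \<noteq> k"
  have "bclass g n (aw k @ A2w g t) = bclass g n (A2w g t @ aw k)"
    using assms t by (intro bclass_eq_of_rel braid_rels_a_A2) auto
  moreover have "A2w g t \<in> bwords g n"
    using braid_rels_lists[OF braid_rels_a_A2[of n k g t]] assms t by (auto simp: bwords_def)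
  ultimately show "inv\<^bsub>Bgrp g n\<^esub> (bclass g n (sw 1)) \<otimes>\<^bsub>Bgrp g n\<^esub>
    (mprod (Bgrp g n) (map (agen g n) [1..<t]) \<otimes>\<^bsub>Bgrp g n\<^esub>
     mprod (Bgrp g n) (map (\<lambda>i. inv\<^bsub>Bgrp g n\<^esub> (agen g n i)) [t+1..<2*g+1])) \<otimes>\<^bsub>Bgrp g n\<^esub>
    inv\<^bsub>Bgrp g n\<^esub> (bclass g n (sw 1)) \<in> centralizer (Bgrp g n) (agen g n k)"
    unfolding bclass_A2w[OF assms(1) t(1), symmetric]
    using assms(2) by (simp add: centralizer_def agen_def bclass_in_carrier)
qed (use assms agen_closed in \<open>auto intro: bclass_in_carrier\<close>)

(* a_(1 k) a_(2 k): the strands at positions 1 and 2 both travel along x_k *)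
definition aw_doubled :: "nat \<Rightarrow> bgen word" where
  "aw_doubled k = (if odd k then aw k @ swi 1 @ aw k @ swi 1 else aw k @ sw 1 @ aw k @ sw 1)"

lemma aw_doubled_commute_sw:
  assumes n: "2 \<le> n" and k: "k \<in> {1..2*g}"
  shows "bclass g n (aw_doubled k @ sw 1) = bclass g n (sw 1 @ aw_doubled k)"
proof -
  let ?s = "bclass g n (sw 1)" and ?a = "agen g n k"
  let ?e = "if odd k then inv\<^bsub>Bgrp g n\<^esub> ?s else ?s"
  have W: "bclass g n (aw_doubled k) = ?a \<otimes>\<^bsub>Bgrp g n\<^esub> ?e \<otimes>\<^bsub>Bgrp g n\<^esub> ?a \<otimes>\<^bsub>Bgrp g n\<^esub> ?e"
    using n k by (simp add: aw_doubled_def agen_def Bgrp_inv inv_word_sw)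
  have "bclass g n (aw_doubled k) \<otimes>\<^bsub>Bgrp g n\<^esub> ?s = ?s \<otimes>\<^bsub>Bgrp g n\<^esub> bclass g n (aw_doubled k)"
    unfolding W by (rule surface_relators.doubled_generator_commute[OF surface_relators_Bgrp[OF assms]])
  then show ?thesis
    by simp
qed

section \<open>Doubling a strand\<close>

text \<open>\<open>double_strand q w\<close> replaces the strand of \<open>w\<close> starting at position \<open>q\<close> by two parallel
  strands starting at \<open>q\<close> and \<open>q + 1\<close>; every other strand starting at \<open>t\<close> is moved to
  \<open>doubled_pos q t\<close>.\<close>

definition double_letter :: "nat \<Rightarrow> bool \<times> bgen \<Rightarrow> bgen word" where
  "double_letter q x = (case x of
     (b, Sg i) \<Rightarrow>
       if i + 1 < q then [(b, Sg i)]
       else if q < i then [(b, Sg (i + 1))]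
       else if i = q then (if b then sw (q + 1) @ sw q else swi (q + 1) @ swi q)
       else (if b then sw i @ sw (i + 1) else swi i @ swi (i + 1))
   | (b, Ag k) \<Rightarrow>
       if q = 1 then (if b then aw_doubled k else inv_word (aw_doubled k)) else [(b, Ag k)])"

fun double_strand :: "nat \<Rightarrow> bgen word \<Rightarrow> bgen word" where
  "double_strand q [] = []"
| "double_strand q (x # w) = double_letter q x @ double_strand (track q [x]) w"

definition doubled_pos :: "nat \<Rightarrow> nat \<Rightarrow> nat" where
  "doubled_pos q t = (if t < q then t else t + 1)"

lemma track_Cons: "track p (x # w) = track (track p [x]) w"
  using track_append[of p "[x]" w] by simp

lemma strand_Cons: "strand p (x # w) = strand p [x] @ strand (track p [x]) w"
  using strand_append[of p "[x]" w] by simp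

lemma braid_letter_cases:
  assumes "x \<in> UNIV \<times> braid_gens g m"
  obtains (Sg) b i where "x = (b, Sg i)" "1 \<le> i" "i \<le> m - 1"
  | (Ag) b k where "x = (b, Ag k)" "1 \<le> k" "k \<le> 2 * g"
  using assms by (cases x; cases "snd x") auto

lemma track_aw_doubled [simp]: "track p (aw_doubled k) = p"
  by (simp add: aw_doubled_def transpose_def)

lemma forget_aw_doubled: "forget (Suc 0) (aw_doubled k) = aw k"
  by (simp add: aw_doubled_def forget_append transpose_def)

lemma strand_aw_doubled: "strand p (aw_doubled k) = (if p = 1 \<or> p = 2 then [(True, k)] else [])"
  by (auto simp: aw_doubled_def strand_append transpose_def)

lemma forget_inv_word_aw_doubled: "forget (Suc 0) (inv_word (aw_doubled k)) = awi k"
  using forget_inv_word[of "Suc 0" "aw_doubled k"] by (simp add: forget_aw_doubled inv_word_aw)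

lemma strand_inv_word_aw_doubled: "strand p (inv_word (aw_doubled k)) = (if p = 1 \<or> p = 2 then [(False, k)] else [])"
  using strand_inv_word[of p "aw_doubled k"] by (simp add: strand_aw_doubled)

lemma track_inv_word_aw_doubled [simp]: "track p (inv_word (aw_doubled k)) = p"
  using track_inv_word[of p "aw_doubled k"] by simp

lemma double_letter_forget:
  assumes "1 \<le> q" "x \<in> UNIV \<times> braid_gens g m"
  shows "forget q (double_letter q x) = [x] \<and> track q (double_letter q x) = track q [x]"
  using assms(2)
proof (cases rule: braid_letter_cases)
  case (Sg b i)
  then show ?thesis
    using assms(1) by (auto simp: double_letter_def forget_append transpose_def sw_def swi_def)
next
  case (Ag b k)
  then show ?thesis
    using assms(1) by (auto simp: double_letter_def forget_aw_doubled forget_inv_word_aw_doubled aw_def awi_def)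
qed

lemma double_letter_doubled_pos:
  assumes "1 \<le> q" "x \<in> UNIV \<times> braid_gens g m"
  shows "track (doubled_pos q t) (double_letter q x) = doubled_pos (track q [x]) (track t [x]) \<and>
    strand (doubled_pos q t) (double_letter q x) = strand t [x] \<and>
    strand q (double_letter q x) = strand q [x]"
  using assms(2)
proof (cases rule: braid_letter_cases)
  case (Sg b i)
  then show ?thesis
    using assms(1) by (auto simp: double_letter_def doubled_pos_def transpose_def strand_append sw_def swi_def)
next
  case (Ag b k)
  then show ?thesis
    using assms(1) by (auto simp: double_letter_def doubled_pos_def strand_aw_doubled strand_inv_word_aw_doubled)
qed

lemma double_strand_forget:
  "1 \<le> q \<Longrightarrow> w \<in> lists (UNIV \<times> braid_gens g m) \<Longrightarrow>
   forget q (double_strand q w) = w \<and> track q (double_strand q w) = track q w"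
proof (induction w arbitrary: q)
  case (Cons x w)
  have x: "x \<in> UNIV \<times> braid_gens g m" and w: "w \<in> lists (UNIV \<times> braid_gens g m)"
    using Cons.prems(2) by auto
  have "1 \<le> track q [x]"
    using x Cons.prems(1) by (cases rule: braid_letter_cases) (auto simp: transpose_def)
  then show ?case
    using Cons.IH[OF _ w] double_letter_forget[OF Cons.prems(1) x]
    by (simp add: forget_append track_Cons[of q x w])
qed simp

lemma double_strand_doubled_pos:
  "1 \<le> q \<Longrightarrow> w \<in> lists (UNIV \<times> braid_gens g m) \<Longrightarrow>
   track (doubled_pos q t) (double_strand q w) = doubled_pos (track q w) (track t w) \<and>
   strand (doubled_pos q t) (double_strand q w) = strand t w \<and>
   strand q (double_strand q w) = strand q w"
proof (induction w arbitrary: q t)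
  case (Cons x w)
  have x: "x \<in> UNIV \<times> braid_gens g m" and w: "w \<in> lists (UNIV \<times> braid_gens g m)"
    using Cons.prems(2) by auto
  have "1 \<le> track q [x]"
    using x Cons.prems(1) by (cases rule: braid_letter_cases) (auto simp: transpose_def)
  then show ?case
    using Cons.IH[OF _ w] double_letter_doubled_pos[OF Cons.prems(1) x, of t]
      double_letter_forget[OF Cons.prems(1) x]
    by (simp add: strand_append track_Cons[of _ x w] strand_Cons[of _ x w])
qed simp

lemma double_strand_pure:
  assumes q: "1 \<le> q" and w: "w \<in> lists (UNIV \<times> braid_gens g m)" and pure: "perm_word w = id"
  shows "perm_word (double_strand q w) = id"
proof -
  have "track p (double_strand q w) = p" for p
  proof (cases "p = q")
    case False
    define t where "t = (if p < q then p else p - 1)"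
    have "doubled_pos q t = p"
      using False by (auto simp: t_def doubled_pos_def)
    then show ?thesis
      using double_strand_doubled_pos[OF q w, of t] pure by (simp add: perm_word_eq_id_iff)
  qed (use double_strand_forget[OF q w] pure in \<open>simp add: perm_word_eq_id_iff\<close>)
  then show ?thesis
    by (simp add: perm_word_eq_id_iff)
qed

lemma double_letter_bwords:
  assumes "2 \<le> n" "1 \<le> q" "q \<le> n - 1" "x \<in> UNIV \<times> braid_gens g (n - 1)"
  shows "double_letter q x \<in> bwords g n"
  using assms(4) by (cases rule: braid_letter_cases)
    (use assms(1-3) in \<open>auto simp: double_letter_def aw_doubled_def bwords_Cons\<close>)

lemma double_strand_bwords:
  "2 \<le> n \<Longrightarrow> 1 \<le> q \<Longrightarrow> q \<le> n - 1 \<Longrightarrow> w \<in> bwords g (n - 1) \<Longrightarrow> double_strand q w \<in> bwords g n"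
proof (induction w arbitrary: q)
  case (Cons x w)
  have x: "x \<in> UNIV \<times> braid_gens g (n - 1)" and w: "w \<in> bwords g (n - 1)"
    using Cons.prems(4) by (auto simp: bwords_Cons)
  have "track q [x] \<in> {1..n - 1}"
    using x Cons.prems(2,3) by (cases rule: braid_letter_cases) (auto simp: transpose_def)
  then show ?case
    using Cons.IH[OF Cons.prems(1) _ _ w] double_letter_bwords[OF Cons.prems(1-3) x] by simp
qed simp

lemma double_strand_in_K:
  assumes n: "2 \<le> n" and q: "q \<in> {1..n - 1}" and w: "w \<in> bwords g (n - 1)" "perm_word w = id"
    and strands: "\<And>s. s \<in> {1..n - 1} \<Longrightarrow> pres_eq (pi_rels g) (strand s w) []"
  shows "bclass g n (double_strand q w) \<in> K g n"
proof (rule KI)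
  have wl: "w \<in> lists (UNIV \<times> braid_gens g (n - 1))"
    using w(1) by (simp add: bwords_def)
  show "double_strand q w \<in> bwords g n"
    using n q w(1) by (intro double_strand_bwords) auto
  show "perm_word (double_strand q w) = id"
    using q wl w(2) by (intro double_strand_pure) auto
  fix s assume s: "s \<in> {1..n}"
  show "pres_eq (pi_rels g) (strand s (double_strand q w)) []"
  proof (cases "s = q")
    case False
    define t where "t = (if s < q then s else s - 1)"
    have "doubled_pos q t = s" "t \<in> {1..n - 1}"
      using False s q by (auto simp: t_def doubled_pos_def)
    then show ?thesis
      using double_strand_doubled_pos[OF _ wl, of q t] strands q by auto
  qed (use double_strand_doubled_pos[OF _ wl, of q] strands q in auto)
qed

definition twist :: "nat \<Rightarrow> bgen word" where
  "twist q = sw q @ sw q"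

lemma twist_bwords: "q \<in> {1..n - 1} \<Longrightarrow> twist q \<in> bwords g n"
  by (simp add: twist_def)

lemma bclass_commute_twist:
  assumes "u \<in> bwords g n" "q \<in> {1..n - 1}" "bclass g n (u @ sw q) = bclass g n (sw q @ u)"
  shows "bclass g n (u @ twist q) = bclass g n (twist q @ u)"
proof -
  have "bclass g n u \<otimes>\<^bsub>Bgrp g n\<^esub> (bclass g n (sw q) \<otimes>\<^bsub>Bgrp g n\<^esub> bclass g n (sw q))
      = (bclass g n (sw q) \<otimes>\<^bsub>Bgrp g n\<^esub> bclass g n (sw q)) \<otimes>\<^bsub>Bgrp g n\<^esub> bclass g n u"
    using assms by (intro group.commute_square[OF group_Bgrp] bclass_in_carrier) simp_all
  then show ?thesis
    by (simp add: twist_def)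
qed

lemma bclass_braid_twist:
  assumes "1 \<le> i" "i + 1 \<le> n - 1"
  shows "bclass g n (sw (i + 1) @ sw i @ twist (i + 1)) = bclass g n (twist i @ sw (i + 1) @ sw i)"
    and "bclass g n (sw i @ sw (i + 1) @ twist i) = bclass g n (twist (i + 1) @ sw i @ sw (i + 1))"
proof -
  have rel: "bclass g n (sw i @ sw (i + 1) @ sw i) = bclass g n (sw (i + 1) @ sw i @ sw (i + 1))"
    using assms by (intro bclass_eq_of_rel braid_rels_braid) auto
  have "bclass g n (sw (i + 1)) \<otimes>\<^bsub>Bgrp g n\<^esub> bclass g n (sw i) \<otimes>\<^bsub>Bgrp g n\<^esub> (bclass g n (sw (i + 1)) \<otimes>\<^bsub>Bgrp g n\<^esub> bclass g n (sw (i + 1)))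
      = (bclass g n (sw i) \<otimes>\<^bsub>Bgrp g n\<^esub> bclass g n (sw i)) \<otimes>\<^bsub>Bgrp g n\<^esub> (bclass g n (sw (i + 1)) \<otimes>\<^bsub>Bgrp g n\<^esub> bclass g n (sw i))"
    using assms rel by (intro group.braid_relation_twist[OF group_Bgrp] bclass_in_carrier) simp_all
  then show "bclass g n (sw (i + 1) @ sw i @ twist (i + 1)) = bclass g n (twist i @ sw (i + 1) @ sw i)"
    by (simp add: twist_def)
  have "bclass g n (sw i) \<otimes>\<^bsub>Bgrp g n\<^esub> bclass g n (sw (i + 1)) \<otimes>\<^bsub>Bgrp g n\<^esub> (bclass g n (sw i) \<otimes>\<^bsub>Bgrp g n\<^esub> bclass g n (sw i))
      = (bclass g n (sw (i + 1)) \<otimes>\<^bsub>Bgrp g n\<^esub> bclass g n (sw (i + 1))) \<otimes>\<^bsub>Bgrp g n\<^esub> (bclass g n (sw i) \<otimes>\<^bsub>Bgrp g n\<^esub> bclass g n (sw (i + 1)))"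
    using assms rel by (intro group.braid_relation_twist[OF group_Bgrp] bclass_in_carrier) simp_all
  then show "bclass g n (sw i @ sw (i + 1) @ twist i) = bclass g n (twist (i + 1) @ sw i @ sw (i + 1))"
    by (simp add: twist_def)
qed

lemma double_letter_Sg_twist:
  assumes q: "q \<in> {1..n - 1}" and i: "1 \<le> i" "i \<le> n - 2"
  shows "bclass g n (double_letter q (True, Sg i) @ twist (track q [(True, Sg i)]))
       = bclass g n (twist q @ double_letter q (True, Sg i))"
proof -
  consider "i + 1 < q" | "q < i" | "i = q" | "i + 1 = q"
    by linarith
  then show ?thesis
  proof cases
    case 1
    have "double_letter q (True, Sg i) = sw i" "track q [(True, Sg i)] = q"
      using 1 by (auto simp: double_letter_def sw_def transpose_def)
    moreover have "bclass g n (sw i @ sw q) = bclass g n (sw q @ sw i)"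
      using 1 i q by (intro bclass_eq_of_rel braid_rels_far) auto
    ultimately show ?thesis
      using i q by (simp add: bclass_commute_twist)
  next
    case 2
    have "double_letter q (True, Sg i) = sw (i + 1)" "track q [(True, Sg i)] = q"
      using 2 by (auto simp: double_letter_def sw_def transpose_def)
    moreover have "bclass g n (sw (i + 1) @ sw q) = bclass g n (sw q @ sw (i + 1))"
      using 2 i q by (intro bclass_eq_of_rel braid_rels_far) auto
    ultimately show ?thesis
      using i q by (simp add: bclass_commute_twist)
  next
    case 3
    then show ?thesis
      using i bclass_braid_twist(1)[of q n g] by (simp add: double_letter_def)
  next
    case 4
    then show ?thesis
      using i q bclass_braid_twist(2)[of i n g] by (simp add: double_letter_def)
  qed
qed

lemma double_letter_Ag_twist:
  assumes n: "2 \<le> n" and q: "q \<in> {1..n - 1}" and k: "k \<in> {1..2*g}"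
  shows "bclass g n (double_letter q (True, Ag k) @ twist (track q [(True, Ag k)]))
       = bclass g n (twist q @ double_letter q (True, Ag k))"
proof (cases "q = 1")
  case True
  have "bclass g n (aw_doubled k @ sw q) = bclass g n (sw q @ aw_doubled k)"
    using aw_doubled_commute_sw[OF n k] True by simp
  moreover have "aw_doubled k \<in> bwords g n"
    using n k by (auto simp: aw_doubled_def)
  ultimately show ?thesis
    using True q by (simp add: double_letter_def bclass_commute_twist)
next
  case False
  have "bclass g n (aw k @ sw q) = bclass g n (sw q @ aw k)"
    using False q k by (intro bclass_eq_of_rel braid_rels_a_sigma) auto
  then show ?thesis
    using False q k by (simp add: double_letter_def bclass_commute_twist flip: aw_def)
qed

lemma double_letter_twist_True:
  assumes n: "2 \<le> n" and q: "q \<in> {1..n - 1}" and y: "(True, y) \<in> UNIV \<times> braid_gens g (n - 1)"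
  shows "bclass g n (double_letter q (True, y) @ twist (track q [(True, y)]))
       = bclass g n (twist q @ double_letter q (True, y))"
  using y
proof (cases rule: braid_letter_cases)
  case (Sg b i)
  then show ?thesis using double_letter_Sg_twist[OF q, of i g] by simp
next
  case (Ag b k)
  then show ?thesis using double_letter_Ag_twist[OF n q, of k] by simp
qed

lemma double_letter_False:
  "double_letter q (False, y) = inv_word (double_letter (track q [(True, y)]) (True, y))"
  by (cases y) (auto simp: double_letter_def transpose_def sw_def swi_def)

lemma track_letter_in_range:
  "x \<in> UNIV \<times> braid_gens g m \<Longrightarrow> q \<in> {1..m} \<Longrightarrow> track q [x] \<in> {1..m}"
  using track_in_range[of "[x]" g m q] by simp

lemma double_letter_twist:
  assumes n: "2 \<le> n" and q: "q \<in> {1..n - 1}" and x: "x \<in> UNIV \<times> braid_gens g (n - 1)"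
  shows "bclass g n (double_letter q x @ twist (track q [x])) = bclass g n (twist q @ double_letter q x)"
proof (cases x)
  case (Pair b y)
  show ?thesis
  proof (cases b)
    case True
    then show ?thesis
      using double_letter_twist_True[OF n q] x Pair by simp
  next
    case False
    let ?q' = "track q [(True, y)]" and ?B = "Bgrp g n"
    let ?D = "bclass g n (double_letter ?q' (True, y))"
    have y: "(True, y) \<in> UNIV \<times> braid_gens g (n - 1)"
      using x Pair by simp
    have q': "?q' \<in> {1..n - 1}" "track ?q' [(True, y)] = q" "track q [x] = ?q'"
      using track_letter_in_range[OF y q] Pair by (cases y; simp)+
    have D: "double_letter ?q' (True, y) \<in> bwords g n"
      using double_letter_bwords[OF n _ _ y] q' by simp
    have "?D \<otimes>\<^bsub>?B\<^esub> bclass g n (twist q) = bclass g n (twist ?q') \<otimes>\<^bsub>?B\<^esub> ?D"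
      using double_letter_twist_True[OF n q'(1) y] q'(2) by simp
    then have "inv\<^bsub>?B\<^esub> ?D \<otimes>\<^bsub>?B\<^esub> bclass g n (twist ?q') = bclass g n (twist q) \<otimes>\<^bsub>?B\<^esub> inv\<^bsub>?B\<^esub> ?D"
      using D q q'(1) by (intro group.conj_inv[OF group_Bgrp] bclass_in_carrier) (auto simp: twist_def)
    then show ?thesis
      using Pair False q'(3) D by (simp add: double_letter_False Bgrp_inv)
  qed
qed

lemma double_strand_twist:
  assumes n: "2 \<le> n"
  shows "q \<in> {1..n - 1} \<Longrightarrow> w \<in> bwords g (n - 1) \<Longrightarrow>
    bclass g n (double_strand q w @ twist (track q w)) = bclass g n (twist q @ double_strand q w)"
proof (induction w arbitrary: q)
  case (Cons x w)
  have x: "x \<in> UNIV \<times> braid_gens g (n - 1)" and w: "w \<in> bwords g (n - 1)"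
    using Cons.prems(2) by (auto simp: bwords_Cons)
  have IH: "bclass g n (double_strand (track q [x]) w @ twist (track q (x # w)))
      = bclass g n (twist (track q [x]) @ double_strand (track q [x]) w)"
    using Cons.IH[OF track_letter_in_range[OF x Cons.prems(1)] w] by (simp add: track_Cons[of q x w])
  have "bclass g n (double_strand q (x # w) @ twist (track q (x # w)))
      = bclass g n (double_letter q x) \<otimes>\<^bsub>Bgrp g n\<^esub> bclass g n (double_strand (track q [x]) w @ twist (track q (x # w)))"
    by simp
  also have "\<dots> = bclass g n (double_letter q x @ twist (track q [x])) \<otimes>\<^bsub>Bgrp g n\<^esub> bclass g n (double_strand (track q [x]) w)"
    unfolding IH by simp
  also have "\<dots> = bclass g n (twist q @ double_strand q (x # w))"
    unfolding double_letter_twist[OF n Cons.prems(1) x] by simp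
  finally show ?case .
qed simp

section \<open>Lifting \<open>K\<^sub>n\<^sub>-\<^sub>1(M)\<close> into the centralizer of \<open>u\<close>\<close>

lemma prodw_sw_upt_bwords: "1 \<le> a \<Longrightarrow> b \<le> n \<Longrightarrow> prodw sw [a..<b] \<in> bwords g n"
  by (induction b) auto

lemma lift1_bwords: "v \<in> lists (UNIV \<times> {1..2*g}) \<Longrightarrow> lift1 v \<in> bwords g n"
  by (induction v) (auto simp: lift1_def bwords_def)

lemma forget_lift1: "forget (Suc 0) (lift1 v) = []"
  by (induction v) (auto simp: lift1_def)

lemma track_lift1 [simp]: "track p (lift1 v) = p"
  by (induction v) (auto simp: lift1_def)

lemma BsetE:
  assumes "transversal g ch" "j \<in> {2..n}" "u \<in> Bset g n ch j"
  obtains X where "X \<in> bwords g n" "forget 1 X = []" "track 1 X = j - 1"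
    "u = bclass g n (X @ twist (j - 1) @ inv_word X)"
proof -
  obtain \<gamma> where \<gamma>: "\<gamma> \<in> carrier (pi1 g)"
    and u: "u = bclass g n (lift1 (ch \<gamma>) @ Tw 1 j @ inv_word (lift1 (ch \<gamma>)))"
    using assms(3) by (auto simp: Bset_def)
  define X where "X = lift1 (ch \<gamma>) @ prodw sw [1..<j - 1]"
  have "lift1 (ch \<gamma>) \<in> bwords g n"
    using assms(1) \<gamma> by (intro lift1_bwords) (auto simp: transversal_def)
  moreover have "prodw sw [1..<j - 1] \<in> bwords g n"
    using assms(2) by (intro prodw_sw_upt_bwords) auto
  ultimately have "X \<in> bwords g n"
    by (simp add: X_def)
  moreover have "forget 1 X = []" "track 1 X = j - 1"
  proof -
    have "1 \<le> j - 1" using assms(2) by auto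
    then show "forget 1 X = []" "track 1 X = j - 1"
      using forget_prodw_sw_upt[of 1 "j - 1" 1] track_prodw_sw_upt[of 1 "j - 1" 1]
      by (simp_all add: X_def forget_append forget_lift1)
  qed
  moreover have "u = bclass g n (X @ twist (j - 1) @ inv_word X)"
    by (simp add: u X_def Tw_def twist_def inv_word_prodw_sw)
  ultimately show ?thesis
    by (rule that)
qed

lemma commuting_lift:
  assumes n: "2 \<le> n" and X: "X \<in> bwords g n" "forget 1 X = []" "track 1 X = q"
    and q: "q \<in> {1..n - 1}" and \<beta>: "\<beta> \<in> K g (n - 1)"
  obtains c where "c \<in> K g n" "rho g n c = \<beta>"
    "c \<otimes>\<^bsub>Bgrp g n\<^esub> bclass g n (X @ twist q @ inv_word X) = bclass g n (X @ twist q @ inv_word X) \<otimes>\<^bsub>Bgrp g n\<^esub> c"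
proof -
  obtain w where w: "w \<in> bwords g (n - 1)" "\<beta> = bclass g (n - 1) w" "perm_word w = id"
    "\<And>s. s \<in> {1..n - 1} \<Longrightarrow> pres_eq (pi_rels g) (strand s w) []"
    using KE[OF \<beta>] by blast
  define D where "D = double_strand q w"
  have D: "D \<in> bwords g n" "bclass g n D \<in> K g n"
    using double_strand_bwords[OF n _ _ w(1)] double_strand_in_K[OF n q w(1,3,4)] q by (auto simp: D_def)
  have track_w: "track q w = q"
    using w(3) by (simp add: perm_word_eq_id_iff)
  have forget_D: "forget q D = w" "track q D = q"
    using double_strand_forget[of q w g "n - 1"] w(1) q track_w by (auto simp: D_def bwords_def)
  define c where "c = bclass g n (X @ D @ inv_word X)"
  have c_eq: "c = bclass g n X \<otimes>\<^bsub>Bgrp g n\<^esub> bclass g n D \<otimes>\<^bsub>Bgrp g n\<^esub> inv\<^bsub>Bgrp g n\<^esub> (bclass g n X)"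
    using X(1) by (simp add: c_def Bgrp_inv)
  have "c \<in> K g n"
    unfolding c_eq using X(1) D(2) by (rule K_conj)
  moreover have "rho g n c = \<beta>"
  proof -
    have "forget 1 (X @ D @ inv_word X) = w"
      using X(2,3) forget_D forget_inv_word[of 1 X] by (simp add: forget_append)
    then show ?thesis
      using X(1) D(1) n w(2) by (simp add: c_def rho_bclass)
  qed
  moreover have "c \<otimes>\<^bsub>Bgrp g n\<^esub> bclass g n (X @ twist q @ inv_word X) = bclass g n (X @ twist q @ inv_word X) \<otimes>\<^bsub>Bgrp g n\<^esub> c"
  proof -
    have U: "bclass g n (X @ twist q @ inv_word X)
        = bclass g n X \<otimes>\<^bsub>Bgrp g n\<^esub> bclass g n (twist q) \<otimes>\<^bsub>Bgrp g n\<^esub> inv\<^bsub>Bgrp g n\<^esub> (bclass g n X)"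
      using X(1) by (simp add: Bgrp_inv)
    have "bclass g n D \<otimes>\<^bsub>Bgrp g n\<^esub> bclass g n (twist q) = bclass g n (twist q) \<otimes>\<^bsub>Bgrp g n\<^esub> bclass g n D"
      using double_strand_twist[OF n q w(1)] track_w by (simp add: D_def)
    then show ?thesis
      unfolding c_eq U
      by (intro group.conj_commute[OF group_Bgrp] bclass_in_carrier X(1) D(1) twist_bwords[OF q])
  qed
  ultimately show ?thesis
    by (rule that)
qed

theorem proposition2p3:
  fixes g n j :: nat
    and \<iota> :: "bgen word set \<Rightarrow> bgen word set"
    and ch :: "nat word set \<Rightarrow> nat word"
    and u \<beta> :: "bgen word set"
  assumes "1 \<le> g" and "2 \<le> n"
    and "\<iota> \<in> hom (Kgrp g (n - 1)) (Kgrp g n)"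
    and "\<forall>b\<in>K g (n - 1). rho g n (\<iota> b) = b"
    and "transversal g ch"
    and "j \<in> {2..n}" and "u \<in> Bset g n ch j"
    and "\<beta> \<in> K g (n - 1)"
  shows "\<exists>\<omega>\<in>F g n. \<iota> \<beta> \<otimes>\<^bsub>Bgrp g n\<^esub> u \<otimes>\<^bsub>Bgrp g n\<^esub> inv\<^bsub>Bgrp g n\<^esub> (\<iota> \<beta>)
                   = \<omega> \<otimes>\<^bsub>Bgrp g n\<^esub> u \<otimes>\<^bsub>Bgrp g n\<^esub> inv\<^bsub>Bgrp g n\<^esub> \<omega>"
proof -
  obtain X where X: "X \<in> bwords g n" "forget 1 X = []" "track 1 X = j - 1"
    and u: "u = bclass g n (X @ twist (j - 1) @ inv_word X)"
    using BsetE[OF assms(5-7)] .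
  have q: "j - 1 \<in> {1..n - 1}"
    using assms(6) by auto
  obtain c where c: "c \<in> K g n" "rho g n c = \<beta>" "c \<otimes>\<^bsub>Bgrp g n\<^esub> u = u \<otimes>\<^bsub>Bgrp g n\<^esub> c"
    unfolding u by (rule commuting_lift[OF assms(2) X q assms(8)])
  have \<iota>\<beta>: "\<iota> \<beta> \<in> K g n"
    using assms(3,8) by (auto simp: hom_def Kgrp_def)
  have "\<iota> \<beta> \<otimes>\<^bsub>Bgrp g n\<^esub> inv\<^bsub>Bgrp g n\<^esub> c \<in> F g n"
    using mult_inv_in_F[OF assms(2) \<iota>\<beta> c(1)] assms(4,8) c(2) by simp
  moreover have "u \<in> carrier (Bgrp g n)"
    using X(1) twist_bwords[OF q] by (simp add: u bclass_in_carrier)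
  ultimately show ?thesis
    using group.conj_mult_inv_eq[OF group_Bgrp, where b = "\<iota> \<beta>" and c = c and u = u] \<iota>\<beta> c K_subset_carrier by blast
qed

end
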